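(* Let $k\in\mathbb N$, $E\subseteq W(A)$ and $\vec s=(s_n(x))_{n=0}^\infty\in V^\infty(A)$ such that $E$ is $k$-large in $\vec s$. Then there exist $m\ge1$, a variable word $w(x)\in\langle (s_n(x))_{n=0}^{m-1}\,\|\,(A_{k+n})_{n=0}^{m-1}\rangle_v$ and $\vec t\in V^\infty(A)$ with $\vec t\le_{k+m}(s_{m+n}(x))_{n=0}^\infty$ such that, setting $F=\{w(a):a\in A_k\}$, the set $E\cap E_F$ is $(k+m)$-large in $\vec t$.
   Context: $\mathbb N=\{0,1,2,\dots\}$. Fix an increasing sequence $A_0\subseteq A_1\subseteq A_2\subseteq\cdots$ of finite nonempty alphabets and set $A=\bigcup_{n\in\mathbb N}A_n$. $W(A)$ denotes the set of all finite words over $A$, including the empty word; words are concatenated by juxtaposition. Fix a symbol $x\notin A$. A variable word over $A$ is a finite word over $A\cup\{x\}$ in which $x$ occurs at least once; $V(A)$ is the set of variable words. For $s(x)\in V(A)$ and $a\in A\cup\{x\}$, $s(a)$ is obtained by replacing every occurrence of $x$ by $a$. $V^\infty(A)$ is the set of infinite sequences of variable words. For a sequence $(s_n(x))_{n\in I}$ of variable words and a sequence $(B_n)_{n\in I}$ of finite subsets of $A$, both indexed by a set $I\subseteq\mathbb N$ that is either a finite interval or of the form $\{m,m+1,\dots\}$: the constant span $\langle (s_n(x))_{n\in I}\,\|\,(B_n)_{n\in I}\rangle_c$ is the set of all words $s_{l_0}(a_0)s_{l_1}(a_1)\cdots s_{l_j}(a_j)$ with $j\ge0$, $l_0<\dots<l_j$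 in $I$ and $a_i\in B_{l_i}$ for each $i$; the variable span $\langle (s_n(x))_{n\in I}\,\|\,(B_n)_{n\in I}\rangle_v$ is the set of all words $s_{l_0}(a_0)\cdots s_{l_j}(a_j)$ with $j\ge0$, $l_0<\dots<l_j$ in $I$, $a_i\in B_{l_i}\cup\{x\}$ for each $i$, and at least one $a_i=x$. (E.g. $(A_{k+n})_{n=p}^{q}$ denotes the sequence $B_n=A_{k+n}$, $p\le n\le q$.) Extracted $k$-subsequences: let $k\in\mathbb N$ and $\vec s=(s_n(x))_{n=0}^\infty\in V^\infty(A)$. A finite sequence $(t_n(x))_{n=0}^l$ of variable words is an extracted $k$-subsequence of $\vec s$ if there exist integers $0=m_0<m_1<\dots<m_{l+1}$ with $t_i(x)\in\langle (s_n(x))_{n=m_i}^{m_{i+1}-1}\,\|\,(A_{k+n})_{n=m_i}^{m_{i+1}-1}\rangle_v$ for all $0\le i\le l$. An infinite sequence $\vec t=(t_n(x))_{n=0}^\infty$ is an extracted $k$-subsequence of $\vec s$ if each initial segment $(t_n(x))_{n=0}^l$ is a finite extracted $k$-subsequence of $\vec s$. We write $\vec t\le_k\vec s$. A set $E\subseteq W(A)$ is $k$-large in $\vec s\in V^\infty(A)$ if $E\cap\langle\vec w\,\|\,(A_{k+n})_{n=0}^\infty\rangle_c\neq\emptyset$ for every $\vec w\in V^\infty(A)$ with $\vec w\le_k\vec s$. For $E\subseteq W(A)$ and nonempty $F\subseteq W(A)$, $E_F=\{z\in W(A): wz\in E\text{ for every }w\in F\}$. *)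

theory Defs
  imports Main
begin

text \<open>Letters have type 'a; the variable symbol x is encoded as None in 'a option,
  a letter a as Some a. The alphabet sequence is Al :: nat \<Rightarrow> 'a set, and A is
  the union of all Al n.\<close>

definition Alph :: "(nat \<Rightarrow> 'a set) \<Rightarrow> 'a set" where
  "Alph Al = (\<Union>n. Al n)"

definition words :: "(nat \<Rightarrow> 'a set) \<Rightarrow> 'a list set" where
  "words Al = lists (Alph Al)"

definition varwords :: "(nat \<Rightarrow> 'a set) \<Rightarrow> 'a option list set" where
  "varwords Al = {s. None \<in> set s \<and> (\<forall>b. Some b \<in> set s \<longrightarrow> b \<in> Alph Al)}"

definition varseqs :: "(nat \<Rightarrow> 'a set) \<Rightarrow> (nat \<Rightarrow> 'a option list) set" where
  "varseqs Al = {s. \<forall>n. s n \<in> varwords Al}"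

definition substc :: "'a option list \<Rightarrow> 'a \<Rightarrow> 'a list" where
  "substc s a = map (case_option a id) s"

definition substv :: "'a option list \<Rightarrow> 'a option \<Rightarrow> 'a option list" where
  "substv s c = map (case_option c Some) s"

definition cspan :: "(nat \<Rightarrow> 'a option list) \<Rightarrow> (nat \<Rightarrow> 'a set) \<Rightarrow> nat set \<Rightarrow> 'a list set" where
  "cspan s B I = {concat (map (\<lambda>(l, a). substc (s l) a) ps) | ps.
     ps \<noteq> [] \<and> sorted_wrt (\<lambda>p q. fst p < fst q) ps \<and>
     (\<forall>(l, a) \<in> set ps. l \<in> I \<and> a \<in> B l)}"

definition vspan :: "(nat \<Rightarrow> 'a option list) \<Rightarrow> (nat \<Rightarrow> 'a set) \<Rightarrow> nat set \<Rightarrow> 'a option list set" where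
  "vspan s B I = {concat (map (\<lambda>(l, c). substv (s l) c) ps) | ps.
     ps \<noteq> [] \<and> sorted_wrt (\<lambda>p q. fst p < fst q) ps \<and>
     (\<forall>(l, c) \<in> set ps. l \<in> I \<and> (c = None \<or> (\<exists>a \<in> B l. c = Some a))) \<and>
     (\<exists>l. (l, None) \<in> set ps)}"

definition extracted_fin ::
  "(nat \<Rightarrow> 'a set) \<Rightarrow> nat \<Rightarrow> (nat \<Rightarrow> 'a option list) \<Rightarrow> nat \<Rightarrow> (nat \<Rightarrow> 'a option list) \<Rightarrow> bool" where
  "extracted_fin Al k t l s \<longleftrightarrow>
     (\<exists>m :: nat \<Rightarrow> nat. m 0 = 0 \<and> (\<forall>i \<le> l. m i < m (Suc i)) \<and>
        (\<forall>i \<le> l. t i \<in> vspan s (\<lambda>n. Al (k + n)) {m i..<m (Suc i)}))"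

definition extracted ::
  "(nat \<Rightarrow> 'a set) \<Rightarrow> nat \<Rightarrow> (nat \<Rightarrow> 'a option list) \<Rightarrow> (nat \<Rightarrow> 'a option list) \<Rightarrow> bool" where
  "extracted Al k t s \<longleftrightarrow> (\<forall>l. extracted_fin Al k t l s)"

definition large ::
  "(nat \<Rightarrow> 'a set) \<Rightarrow> nat \<Rightarrow> 'a list set \<Rightarrow> (nat \<Rightarrow> 'a option list) \<Rightarrow> bool" where
  "large Al k E s \<longleftrightarrow>
     (\<forall>w \<in> varseqs Al. extracted Al k w s \<longrightarrow> E \<inter> cspan w (\<lambda>n. Al (k + n)) UNIV \<noteq> {})"

definition shiftset :: "(nat \<Rightarrow> 'a set) \<Rightarrow> 'a list set \<Rightarrow> 'a list set \<Rightarrow> 'a list set" where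
  "shiftset Al E F = {z \<in> words Al. \<forall>w \<in> F. w @ z \<in> E}"

end

theory Submission
  imports Defs "HOL-Library.FuncSet"
begin

text \<open>Suppose the conclusion fails. We then build variable words v_0, v_1, ..., each
  spanned by a finite stretch of s lying after the stretch used by its predecessor, such
  that P v_i(a) \<notin> E for every a \<in> A_{k+i} and every prefix P that is the empty word or a
  constant word spanned by v_0, ..., v_{i-1}. Then (v_i) is an extracted k-subsequence of s
  whose constant span misses E, contradicting largeness.

  To find v_i, take the next N terms t of the current extracted sequence, N given by the
  Hales-Jewett theorem over A_{k+i}. As the conclusion fails for each of the finitely many
  words w = P l(t) (P a prefix, l a line), the rest of the sequence can be refined so that
  its constant span misses every E \<inter> E_F with F = {w(a) | a \<in> A_k}; largeness gives some
  z \<in> E in it, so each such w has a letter a \<in> A_k with w(a) z \<notin> E. Colour a point c by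
  the set of prefixes P with P t(c) z \<in> E and take a monochromatic line l: then
  v_i = l(t) z works, because A_k \<subseteq> A_{k+i}.\<close>

section \<open>The Hales-Jewett theorem\<close>

definition cube :: "'a set \<Rightarrow> nat \<Rightarrow> 'a list set" where
  "cube L n = {w. length w = n \<and> set w \<subseteq> L}"

definition lines :: "'a set \<Rightarrow> nat \<Rightarrow> 'a option list set" where
  "lines L n = {l. length l = n \<and> None \<in> set l \<and> (\<forall>y. Some y \<in> set l \<longrightarrow> y \<in> L)}"

definition mono_line :: "('a list \<Rightarrow> 'c) \<Rightarrow> 'a set \<Rightarrow> 'a option list \<Rightarrow> bool" where
  "mono_line \<chi> L l \<longleftrightarrow> (\<forall>a\<in>L. \<forall>a'\<in>L. \<chi> (substc l a) = \<chi> (substc l a'))"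

definition hales_jewett :: "'a set \<Rightarrow> bool" where
  "hales_jewett L \<longleftrightarrow> (\<forall>r. \<exists>N. \<forall>\<chi>::'a list \<Rightarrow> nat.
     (\<forall>w\<in>cube L N. \<chi> w < r) \<longrightarrow> (\<exists>l\<in>lines L N. mono_line \<chi> L l))"

lemma substc_append [simp]: "substc (x @ y) a = substc x a @ substc y a"
  by (simp add: substc_def)

lemma substc_map_Some [simp]: "substc (map Some u) a = u"
  by (induction u) (simp_all add: substc_def)

lemma length_substc [simp]: "length (substc l a) = length l"
  by (simp add: substc_def)

lemma substc_in_cube: "l \<in> lines L n \<Longrightarrow> a \<in> L \<Longrightarrow> substc l a \<in> cube L n"
  unfolding lines_def cube_def substc_def by (auto split: option.splits)

lemma append_in_cube: "u \<in> cube L m \<Longrightarrow> v \<in> cube L n \<Longrightarrow> u @ v \<in> cube L (m + n)"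
  unfolding cube_def by auto

lemma cube_mono: "u \<in> cube L n \<Longrightarrow> L \<subseteq> L' \<Longrightarrow> u \<in> cube L' n"
  unfolding cube_def by auto

lemma lines_mono: "l \<in> lines L n \<Longrightarrow> L \<subseteq> L' \<Longrightarrow> l \<in> lines L' n"
  unfolding lines_def by blast

lemma lines_length_pos: "l \<in> lines L n \<Longrightarrow> 0 < n"
  unfolding lines_def using length_pos_if_in_set[of None l] by simp

lemma finite_cube: "finite L \<Longrightarrow> finite (cube L n)"
  unfolding cube_def using finite_lists_length_eq[of L n] by (simp add: conj_commute)

lemma finite_lines: "finite L \<Longrightarrow> finite (lines L n)"
proof -
  assume "finite L"
  then have "finite {l. set l \<subseteq> insert None (Some ` L) \<and> length l = n}"
    by (intro finite_lists_length_eq) auto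
  moreover have "set l \<subseteq> insert None (Some ` L)" if "l \<in> lines L n" for l
  proof
    fix x assume x: "x \<in> set l"
    show "x \<in> insert None (Some ` L)"
    proof (cases x)
      case (Some y)
      then have "y \<in> L"
        using x that unfolding lines_def by blast
      then show ?thesis
        using Some by blast
    qed simp
  qed
  then have "lines L n \<subseteq> {l. set l \<subseteq> insert None (Some ` L) \<and> length l = n}"
    unfolding lines_def by blast
  ultimately show ?thesis
    by (rule finite_subset[rotated])
qed

lemma mono_line_prepend:
  assumes "u \<in> cube L m" and "l \<in> lines L n" and "mono_line (\<lambda>v. \<chi> (u @ v)) L l"
  shows "map Some u @ l \<in> lines L (m + n)" and "mono_line \<chi> L (map Some u @ l)"
proof -
  show "map Some u @ l \<in> lines L (m + n)"
    using assms(1,2) unfolding lines_def cube_def by auto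
  show "mono_line \<chi> L (map Some u @ l)"
    using assms(3) unfolding mono_line_def substc_append substc_map_Some by blast
qed

lemma hales_jewett_colours:
  assumes "hales_jewett L" and "finite C"
  shows "\<exists>N. \<forall>\<chi>::'a list \<Rightarrow> 'c. \<chi> ` cube L N \<subseteq> C \<longrightarrow> (\<exists>l\<in>lines L N. mono_line \<chi> L l)"
proof -
  obtain enc where enc: "bij_betw enc C {0..<card C}"
    using ex_bij_betw_finite_nat[OF \<open>finite C\<close>] by blast
  obtain N where N: "\<And>\<chi>::'a list \<Rightarrow> nat. \<forall>w\<in>cube L N. \<chi> w < card C \<Longrightarrow>
      \<exists>l\<in>lines L N. mono_line \<chi> L l"
    using assms(1) unfolding hales_jewett_def by blast
  have "\<exists>l\<in>lines L N. mono_line \<chi> L l" if \<chi>: "\<chi> ` cube L N \<subseteq> C" for \<chi> :: "'a list \<Rightarrow> 'c"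
  proof -
    have "\<forall>w\<in>cube L N. (enc \<circ> \<chi>) w < card C"
      using \<chi> bij_betwE[OF enc] by auto
    then obtain l where l: "l \<in> lines L N" and mono: "mono_line (enc \<circ> \<chi>) L l"
      using N by blast
    have "\<chi> (substc l a) = \<chi> (substc l a')" if "a \<in> L" "a' \<in> L" for a a'
    proof -
      have "\<chi> (substc l a) \<in> C" and "\<chi> (substc l a') \<in> C"
        using \<chi> substc_in_cube[OF l] that by blast+
      moreover have "enc (\<chi> (substc l a)) = enc (\<chi> (substc l a'))"
        using mono[unfolded mono_line_def, rule_format, OF that] by simp
      ultimately show ?thesis
        using inj_onD[OF bij_betw_imp_inj_on[OF enc]] by blast
    qed
    with l show ?thesis
      unfolding mono_line_def by blast
  qed
  then show ?thesis
    by blast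
qed

lemma hales_jewett_singleton: "hales_jewett {b}"
  unfolding hales_jewett_def
proof (intro allI exI[of _ 1] impI)
  fix r and \<chi> :: "'a list \<Rightarrow> nat"
  show "\<exists>l\<in>lines {b} 1. mono_line \<chi> {b} l"
    by (rule bexI[of _ "[None]"]) (auto simp: lines_def mono_line_def)
qed

text \<open>The colour-focused lines of the classical inductive proof.\<close>

definition focused_lines ::
  "('a list \<Rightarrow> nat) \<Rightarrow> 'a set \<Rightarrow> 'a \<Rightarrow> nat \<Rightarrow> nat \<Rightarrow> (nat \<Rightarrow> 'a option list) \<Rightarrow> (nat \<Rightarrow> nat) \<Rightarrow>
    'a list \<Rightarrow> bool" where
  "focused_lines \<chi> L b n s Ls col f \<longleftrightarrow> f \<in> cube (insert b L) n \<and> inj_on col {..<s} \<and>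
     (\<forall>i<s. Ls i \<in> lines (insert b L) n \<and> (\<forall>a\<in>L. \<chi> (substc (Ls i) a) = col i) \<and>
       substc (Ls i) b = f)"

lemma focused_line_mono:
  assumes "focused_lines \<chi> L b n s Ls col f" and "i < s" and "\<chi> f = col i"
  shows "Ls i \<in> lines (insert b L) n" and "mono_line \<chi> (insert b L) (Ls i)"
proof -
  have "\<chi> (substc (Ls i) a) = col i" if "a \<in> insert b L" for a
    using assms that unfolding focused_lines_def by auto
  then show "mono_line \<chi> (insert b L) (Ls i)"
    unfolding mono_line_def by simp
  show "Ls i \<in> lines (insert b L) n"
    using assms unfolding focused_lines_def by blast
qed

lemma focused_lines_extend:
  assumes lam: "lam \<in> lines L m" and a0: "a0 \<in> L"
    and rows: "\<And>a v. a \<in> L \<Longrightarrow> v \<in> cube (insert b L) n \<Longrightarrow>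
      \<chi> (substc lam a @ v) = \<chi> (substc lam a0 @ v)"
    and foc: "focused_lines (\<lambda>v. \<chi> (substc lam a0 @ v)) L b n s Ls col f"
    and new: "\<chi> (substc lam a0 @ f) \<notin> col ` {..<s}"
  shows "focused_lines \<chi> L b (m + n) (Suc s)
    (\<lambda>i. if i < s then lam @ Ls i else lam @ map Some f)
    (col(s := \<chi> (substc lam a0 @ f))) (substc lam b @ f)"
proof -
  have lam': "lam \<in> lines (insert b L) m"
    using lam by (rule lines_mono) blast
  have f: "f \<in> cube (insert b L) n" and inj: "inj_on col {..<s}"
    and Ls: "\<And>i. i < s \<Longrightarrow> Ls i \<in> lines (insert b L) n \<and>
      (\<forall>a\<in>L. \<chi> (substc lam a0 @ substc (Ls i) a) = col i) \<and> substc (Ls i) b = f"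
    using foc unfolding focused_lines_def by auto
  have "inj_on (col(s := \<chi> (substc lam a0 @ f))) (insert s {..<s})"
    using inj new by (force simp: inj_on_def)
  then have inj': "inj_on (col(s := \<chi> (substc lam a0 @ f))) {..<Suc s}"
    by (simp add: lessThan_Suc)
  have cube: "substc lam b @ f \<in> cube (insert b L) (m + n)"
    using append_in_cube[OF substc_in_cube[OF lam'] f] by simp
  have old_lines: "lam @ Ls i \<in> lines (insert b L) (m + n)
      \<and> (\<forall>a\<in>L. \<chi> (substc (lam @ Ls i) a) = col i) \<and> substc (lam @ Ls i) b = substc lam b @ f"
    if "i < s" for i
  proof (intro conjI ballI)
    show "lam @ Ls i \<in> lines (insert b L) (m + n)"
      using lam' Ls[OF that] unfolding lines_def by auto
    show "\<chi> (substc (lam @ Ls i) a) = col i" if "a \<in> L" for a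
      using rows[OF that substc_in_cube] Ls \<open>i < s\<close> that by simp
    show "substc (lam @ Ls i) b = substc lam b @ f"
      using Ls[OF that] by simp
  qed
  have new_line: "lam @ map Some f \<in> lines (insert b L) (m + n)
      \<and> (\<forall>a\<in>L. \<chi> (substc (lam @ map Some f) a) = \<chi> (substc lam a0 @ f))"
    using lam' f rows[OF _ f] unfolding lines_def cube_def by auto
  show ?thesis
    unfolding focused_lines_def using inj' cube old_lines new_line
    by (auto simp: less_Suc_eq)
qed

lemma focused_lines_all_colours:
  assumes foc: "focused_lines \<chi> L b n r Ls col f" and bnd: "\<forall>w\<in>cube (insert b L) n. \<chi> w < r"
    and "L \<noteq> {}"
  shows "\<exists>l\<in>lines (insert b L) n. mono_line \<chi> (insert b L) l"
proof -
  obtain a0 where a0: "a0 \<in> L"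
    using \<open>L \<noteq> {}\<close> by blast
  have "col i < r" if "i < r" for i
  proof -
    have "Ls i \<in> lines (insert b L) n" and "col i = \<chi> (substc (Ls i) a0)"
      using foc a0 that unfolding focused_lines_def by auto
    then show ?thesis
      using bnd substc_in_cube[of "Ls i" "insert b L" n a0] a0 by simp
  qed
  then have "col ` {..<r} = {..<r}"
    using foc unfolding focused_lines_def by (intro endo_inj_surj) auto
  moreover have "\<chi> f < r"
    using foc bnd unfolding focused_lines_def by blast
  ultimately have "\<chi> f \<in> col ` {..<r}"
    by simp
  then obtain i where "i < r" "\<chi> f = col i"
    by blast
  then show ?thesis
    using focused_line_mono[OF foc] by blast
qed

text \<open>Hales-Jewett for L applied to u \<mapsto> (v \<mapsto> \<chi> (u @ v)), a colouring with finitely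
  many colours.\<close>

lemma uniform_rows_line:
  assumes "hales_jewett L" and "L \<subseteq> L'" and "finite L'"
  shows "\<exists>m. \<forall>\<chi>::'a list \<Rightarrow> nat. (\<forall>w\<in>cube L' (m + n). \<chi> w < r) \<longrightarrow>
    (\<exists>lam\<in>lines L m. \<forall>a\<in>L. \<forall>a'\<in>L. \<forall>v\<in>cube L' n. \<chi> (substc lam a @ v) = \<chi> (substc lam a' @ v))"
proof -
  define C where "C = PiE (cube L' n) (\<lambda>_. {..<r})"
  have "finite C"
    unfolding C_def using \<open>finite L'\<close> by (simp add: finite_cube finite_PiE)
  then obtain m where m: "\<And>\<psi>::'a list \<Rightarrow> 'a list \<Rightarrow> nat. \<psi> ` cube L m \<subseteq> C \<Longrightarrow>
      \<exists>l\<in>lines L m. mono_line \<psi> L l"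
    using hales_jewett_colours[OF assms(1)] by blast
  have "\<exists>lam\<in>lines L m. \<forall>a\<in>L. \<forall>a'\<in>L. \<forall>v\<in>cube L' n. \<chi> (substc lam a @ v) = \<chi> (substc lam a' @ v)"
    if bnd: "\<forall>w\<in>cube L' (m + n). \<chi> w < r" for \<chi> :: "'a list \<Rightarrow> nat"
  proof -
    define \<psi> where "\<psi> u = restrict (\<lambda>v. \<chi> (u @ v)) (cube L' n)" for u
    have "\<psi> u \<in> C" if "u \<in> cube L m" for u
    proof -
      have "u @ v \<in> cube L' (m + n)" if "v \<in> cube L' n" for v
        using append_in_cube[OF cube_mono[OF \<open>u \<in> cube L m\<close> \<open>L \<subseteq> L'\<close>] that] .
      then show ?thesis
        using bnd unfolding C_def \<psi>_def by auto
    qed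
    then obtain lam where lam: "lam \<in> lines L m" and mono: "mono_line \<psi> L lam"
      using m by blast
    have "\<chi> (substc lam a @ v) = \<chi> (substc lam a' @ v)"
      if "a \<in> L" "a' \<in> L" "v \<in> cube L' n" for a a' v
    proof -
      have "\<psi> (substc lam a) v = \<psi> (substc lam a') v"
        using mono[unfolded mono_line_def, rule_format, OF that(1,2)] by simp
      then show ?thesis
        using \<open>v \<in> cube L' n\<close> unfolding \<psi>_def by simp
    qed
    with lam show ?thesis
      by blast
  qed
  then show ?thesis
    by blast
qed

lemma focused_or_mono_line_prepend:
  assumes lam: "lam \<in> lines L m" and a0: "a0 \<in> L"
    and rows: "\<And>a v. a \<in> L \<Longrightarrow> v \<in> cube (insert b L) n \<Longrightarrow>
      \<chi> (substc lam a @ v) = \<chi> (substc lam a0 @ v)"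
    and suffix: "(\<exists>l\<in>lines (insert b L) n. mono_line (\<lambda>v. \<chi> (substc lam a0 @ v)) (insert b L) l) \<or>
      (\<exists>Ls col f. focused_lines (\<lambda>v. \<chi> (substc lam a0 @ v)) L b n s Ls col f)"
  shows "(\<exists>l\<in>lines (insert b L) (m + n). mono_line \<chi> (insert b L) l) \<or>
    (\<exists>Ls col f. focused_lines \<chi> L b (m + n) (Suc s) Ls col f)"
proof -
  define u where "u = substc lam a0"
  have "u \<in> cube (insert b L) m"
    unfolding u_def using substc_in_cube[OF lines_mono[OF lam subset_insertI]] a0 by blast
  then have prepend: "\<exists>l\<in>lines (insert b L) (m + n). mono_line \<chi> (insert b L) l"
    if "l \<in> lines (insert b L) n" "mono_line (\<lambda>v. \<chi> (u @ v)) (insert b L) l" for l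
    using mono_line_prepend that by blast
  from suffix[folded u_def] consider
      "\<exists>l\<in>lines (insert b L) n. mono_line (\<lambda>v. \<chi> (u @ v)) (insert b L) l"
    | Ls col f where "focused_lines (\<lambda>v. \<chi> (u @ v)) L b n s Ls col f"
    by blast
  then show ?thesis
  proof cases
    case (2 Ls col f)
    show ?thesis
    proof (cases "\<chi> (u @ f) \<in> col ` {..<s}")
      case True
      then obtain i where "i < s" and "\<chi> (u @ f) = col i"
        by blast
      then show ?thesis
        using focused_line_mono[OF 2] prepend by blast
    next
      case False
      then show ?thesis
        using focused_lines_extend[OF lam a0 rows 2[unfolded u_def]] unfolding u_def by blast
    qed
  qed (use prepend in blast)
qed

lemma focused_or_mono_line:
  assumes hj: "hales_jewett L" and "L \<noteq> {}" and "finite L"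
  shows "\<exists>n. \<forall>\<chi>::'a list \<Rightarrow> nat. (\<forall>w\<in>cube (insert b L) n. \<chi> w < r) \<longrightarrow>
    (\<exists>l\<in>lines (insert b L) n. mono_line \<chi> (insert b L) l) \<or>
    (\<exists>Ls col f. focused_lines \<chi> L b n s Ls col f)"
proof (induction s)
  case 0
  have "focused_lines \<chi> L b 0 0 (\<lambda>_. []) id []" for \<chi>
    by (simp add: focused_lines_def cube_def)
  then show ?case
    by blast
next
  case (Suc s)
  obtain a0 where a0: "a0 \<in> L"
    using \<open>L \<noteq> {}\<close> by blast
  from Suc.IH obtain n where n: "\<And>\<chi>::'a list \<Rightarrow> nat. \<forall>w\<in>cube (insert b L) n. \<chi> w < r \<Longrightarrow>
      (\<exists>l\<in>lines (insert b L) n. mono_line \<chi> (insert b L) l) \<or>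
      (\<exists>Ls col f. focused_lines \<chi> L b n s Ls col f)"
    by blast
  have "finite (insert b L)"
    using \<open>finite L\<close> by simp
  from uniform_rows_line[OF hj subset_insertI this] obtain m
    where m: "\<And>\<chi>::'a list \<Rightarrow> nat. \<forall>w\<in>cube (insert b L) (m + n). \<chi> w < r \<Longrightarrow>
      \<exists>lam\<in>lines L m. \<forall>a\<in>L. \<forall>a'\<in>L. \<forall>v\<in>cube (insert b L) n.
        \<chi> (substc lam a @ v) = \<chi> (substc lam a' @ v)"
    by blast
  have "(\<exists>l\<in>lines (insert b L) (m + n). mono_line \<chi> (insert b L) l) \<or>
      (\<exists>Ls col f. focused_lines \<chi> L b (m + n) (Suc s) Ls col f)"
    if bnd: "\<forall>w\<in>cube (insert b L) (m + n). \<chi> w < r" for \<chi> :: "'a list \<Rightarrow> nat"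
  proof -
    obtain lam where lam: "lam \<in> lines L m"
      and rows: "\<And>a v. a \<in> L \<Longrightarrow> v \<in> cube (insert b L) n \<Longrightarrow>
        \<chi> (substc lam a @ v) = \<chi> (substc lam a0 @ v)"
      using m[OF bnd] a0 by blast
    have "substc lam a0 \<in> cube (insert b L) m"
      using substc_in_cube[OF lines_mono[OF lam subset_insertI]] a0 by blast
    then have "\<forall>w\<in>cube (insert b L) n. \<chi> (substc lam a0 @ w) < r"
      using bnd append_in_cube by blast
    from focused_or_mono_line_prepend[where \<chi> = \<chi>, OF lam a0 rows n[OF this]] show ?thesis .
  qed
  then show ?case
    by blast
qed

lemma hales_jewett_insert:
  assumes "hales_jewett L" and "L \<noteq> {}" and "finite L"
  shows "hales_jewett (insert b L)"
  unfolding hales_jewett_def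
proof
  fix r
  obtain n where n: "\<And>\<chi>::'a list \<Rightarrow> nat. \<forall>w\<in>cube (insert b L) n. \<chi> w < r \<Longrightarrow>
      (\<exists>l\<in>lines (insert b L) n. mono_line \<chi> (insert b L) l) \<or>
      (\<exists>Ls col f. focused_lines \<chi> L b n r Ls col f)"
    using focused_or_mono_line[OF assms] by blast
  show "\<exists>N. \<forall>\<chi>::'a list \<Rightarrow> nat. (\<forall>w\<in>cube (insert b L) N. \<chi> w < r) \<longrightarrow>
    (\<exists>l\<in>lines (insert b L) N. mono_line \<chi> (insert b L) l)"
  proof (intro exI allI impI)
    fix \<chi> :: "'a list \<Rightarrow> nat"
    assume bnd: "\<forall>w\<in>cube (insert b L) n. \<chi> w < r"
    then show "\<exists>l\<in>lines (insert b L) n. mono_line \<chi> (insert b L) l"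
      using n focused_lines_all_colours[OF _ bnd \<open>L \<noteq> {}\<close>] by blast
  qed
qed

theorem hales_jewett_theorem: "finite L \<Longrightarrow> L \<noteq> {} \<Longrightarrow> hales_jewett L"
  by (induction L rule: finite_ne_induct) (simp_all add: hales_jewett_singleton hales_jewett_insert)

section \<open>Spans\<close>

definition span_word :: "(nat \<Rightarrow> 'a option list) \<Rightarrow> (nat \<times> 'a option) list \<Rightarrow> 'a option list" where
  "span_word s ps = concat (map (\<lambda>(l, c). substv (s l) c) ps)"

definition admissible :: "(nat \<Rightarrow> 'a set) \<Rightarrow> nat set \<Rightarrow> (nat \<times> 'a option) list \<Rightarrow> bool" where
  "admissible B I ps \<longleftrightarrow> sorted_wrt (\<lambda>p q. fst p < fst q) ps \<and>
     (\<forall>(l, c) \<in> set ps. l \<in> I \<and> (c = None \<or> (\<exists>a \<in> B l. c = Some a)))"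

lemma span_word_Nil [simp]: "span_word s [] = []"
  by (simp add: span_word_def)

lemma span_word_Cons [simp]: "span_word s ((l, c) # ps) = substv (s l) c @ span_word s ps"
  by (simp add: span_word_def)

lemma span_word_append [simp]: "span_word s (ps @ qs) = span_word s ps @ span_word s qs"
  by (simp add: span_word_def)

lemma vspan_eq:
  "vspan s B I = {span_word s ps | ps. ps \<noteq> [] \<and> admissible B I ps \<and> (\<exists>l. (l, None) \<in> set ps)}"
  unfolding vspan_def span_word_def admissible_def by blast

lemma substv_None [simp]: "substv w None = w"
proof -
  have "case_option None Some x = x" for x :: "'a option"
    by (cases x) auto
  then show ?thesis
    unfolding substv_def by (simp add: map_idI)
qed

lemma substv_Nil [simp]: "substv [] c = []"
  by (simp add: substv_def)

lemma substv_append [simp]: "substv (x @ y) c = substv x c @ substv y c"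
  by (simp add: substv_def)

lemma substv_substv: "substv (substv w c') c = substv w (case_option c Some c')"
  unfolding substv_def by (induction w) (auto split: option.splits)

lemma substv_span_word: "substv (span_word s ps) c = span_word s (map (apsnd (case_option c Some)) ps)"
  by (induction ps) (auto simp: substv_substv)

lemma map_Some_substc: "map Some (substc w a) = substv w (Some a)"
  unfolding substc_def substv_def by (induction w) (auto split: option.splits)

lemma substc_substv: "substc (substv w c) a = substc w (case_option a id c)"
  unfolding substc_def substv_def by (induction w) (auto split: option.splits)

lemma substc_concat: "substc (concat ws) a = concat (map (\<lambda>w. substc w a) ws)"
  by (simp add: substc_def map_concat)

lemma cspan_iff: "z \<in> cspan s B I \<longleftrightarrow>
   (\<exists>ps. ps \<noteq> [] \<and> admissible B I ps \<and> (\<forall>p\<in>set ps. snd p \<noteq> None) \<and> map Some z = span_word s ps)"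
proof
  assume "z \<in> cspan s B I"
  then obtain ps0 where z: "z = concat (map (\<lambda>(l, a). substc (s l) a) ps0)" and "ps0 \<noteq> []"
    and "sorted_wrt (\<lambda>p q. fst p < fst q) ps0" and "\<forall>(l, a) \<in> set ps0. l \<in> I \<and> a \<in> B l"
    unfolding cspan_def by blast
  moreover define ps where "ps = map (apsnd Some) ps0"
  moreover have "map Some z = span_word s ps"
    unfolding z ps_def by (induction ps0) (auto simp: map_Some_substc)
  ultimately show "\<exists>ps. ps \<noteq> [] \<and> admissible B I ps \<and> (\<forall>p\<in>set ps. snd p \<noteq> None) \<and> map Some z = span_word s ps"
    unfolding admissible_def by (intro exI[of _ ps]) (auto simp: sorted_wrt_map case_prod_beta)
next
  assume "\<exists>ps. ps \<noteq> [] \<and> admissible B I ps \<and> (\<forall>p\<in>set ps. snd p \<noteq> None) \<and> map Some z = span_word s ps"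
  then obtain ps where ne: "ps \<noteq> []" and adm: "admissible B I ps" and nn: "\<forall>p\<in>set ps. snd p \<noteq> None"
    and z: "map Some z = span_word s ps"
    by blast
  define ps0 where "ps0 = map (apsnd the) ps"
  have "map Some (concat (map (\<lambda>(l, a). substc (s l) a) ps0)) = span_word s ps"
    unfolding ps0_def using nn by (induction ps) (auto simp: map_Some_substc)
  then have "z = concat (map (\<lambda>(l, a). substc (s l) a) ps0)"
    using z by (metis inj_Some inj_map_eq_map)
  moreover have "sorted_wrt (\<lambda>p q. fst p < fst q) ps0"
    using adm unfolding admissible_def ps0_def by (auto simp: sorted_wrt_map case_prod_beta)
  moreover have "\<forall>(l, a) \<in> set ps0. l \<in> I \<and> a \<in> B l"
    using adm nn unfolding admissible_def ps0_def by fastforce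
  ultimately show "z \<in> cspan s B I"
    unfolding cspan_def using ne ps0_def by blast
qed

lemma admissible_mono:
  "admissible B I ps \<Longrightarrow> I \<subseteq> I' \<Longrightarrow> (\<forall>l\<in>I. B l \<subseteq> B' l) \<Longrightarrow> admissible B' I' ps"
  unfolding admissible_def by fastforce

lemma vspan_mono:
  "w \<in> vspan s B I \<Longrightarrow> I \<subseteq> I' \<Longrightarrow> (\<forall>l\<in>I. B l \<subseteq> B' l) \<Longrightarrow> w \<in> vspan s B' I'"
  unfolding vspan_eq using admissible_mono by blast

lemma cspan_mono:
  "z \<in> cspan s B I \<Longrightarrow> I \<subseteq> I' \<Longrightarrow> (\<forall>l\<in>I. B l \<subseteq> B' l) \<Longrightarrow> z \<in> cspan s B' I'"
  unfolding cspan_iff using admissible_mono by blast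

lemma admissible_append:
  assumes "admissible B I ps" and "admissible B I' qs" and "\<forall>x\<in>I. \<forall>y\<in>I'. x < y"
  shows "admissible B (I \<union> I') (ps @ qs)"
proof -
  have "fst p < fst q" if "p \<in> set ps" "q \<in> set qs" for p q
    using assms that unfolding admissible_def by fastforce
  then show ?thesis
    using assms unfolding admissible_def by (auto simp: sorted_wrt_append)
qed

lemma admissible_interval_nonempty: "admissible B {a..<b} ps \<Longrightarrow> ps \<noteq> [] \<Longrightarrow> a < b"
  unfolding admissible_def by (cases ps) auto

lemma admissible_append_intervals:
  assumes "admissible B {a..<b} ps" and "admissible B {b..<c} qs" and "a \<le> b" and "b \<le> c"
  shows "admissible B {a..<c} (ps @ qs)"
proof -
  have "admissible B ({a..<b} \<union> {b..<c}) (ps @ qs)"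
    using admissible_append[OF assms(1,2)] by auto
  moreover have "{a..<b} \<union> {b..<c} = {a..<c}"
    using assms(3,4) by auto
  ultimately show ?thesis
    by simp
qed

lemma vspan_append_cspan:
  assumes "x \<in> vspan s B {a..<b}" and "z \<in> cspan s B {b..<c}"
  shows "x @ map Some z \<in> vspan s B {a..<c}"
proof -
  obtain ps where ps: "ps \<noteq> []" "admissible B {a..<b} ps" "\<exists>l. (l, None) \<in> set ps" "x = span_word s ps"
    using assms(1) unfolding vspan_eq by blast
  obtain qs where qs: "qs \<noteq> []" "admissible B {b..<c} qs" "map Some z = span_word s qs"
    using assms(2) unfolding cspan_iff by blast
  have "admissible B {a..<c} (ps @ qs)"
    using admissible_append_intervals[OF ps(2) qs(2)] admissible_interval_nonempty ps qs by fastforce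
  moreover have "x @ map Some z = span_word s (ps @ qs)"
    using ps(4) qs(3) by simp
  moreover have "\<exists>l. (l, None) \<in> set (ps @ qs)"
    using ps(3) by auto
  ultimately show ?thesis
    unfolding vspan_eq using ps(1) by blast
qed

lemma cspan_append_vspan:
  assumes "z \<in> insert [] (cspan s B {a..<b})" and "x \<in> vspan s B {b..<c}" and "a \<le> b"
  shows "map Some z @ x \<in> vspan s B {a..<c}"
proof (cases "z = []")
  case True
  then show ?thesis
    using assms(2,3) vspan_mono[of x s B "{b..<c}" "{a..<c}"] by auto
next
  case False
  then have z: "z \<in> cspan s B {a..<b}"
    using assms(1) by auto
  obtain ps where ps: "ps \<noteq> []" "admissible B {b..<c} ps" "\<exists>l. (l, None) \<in> set ps" "x = span_word s ps"
    using assms(2) unfolding vspan_eq by blast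
  obtain qs where qs: "qs \<noteq> []" "admissible B {a..<b} qs" "map Some z = span_word s qs"
    using z unfolding cspan_iff by blast
  have "admissible B {a..<c} (qs @ ps)"
    using admissible_append_intervals[OF qs(2) ps(2)] admissible_interval_nonempty ps qs by fastforce
  moreover have "map Some z @ x = span_word s (qs @ ps)"
    using ps(4) qs(3) by simp
  moreover have "\<exists>l. (l, None) \<in> set (qs @ ps)"
    using ps(3) by auto
  ultimately show ?thesis
    unfolding vspan_eq using ps(1) by blast
qed

lemma cspan_append_cspan:
  assumes "z1 \<in> insert [] (cspan s B {a..<b})" and "z2 \<in> cspan s B {b..<c}" and "a \<le> b"
  shows "z1 @ z2 \<in> cspan s B {a..<c}"
proof (cases "z1 = []")
  case True
  then show ?thesis
    using assms(2,3) cspan_mono[of z2 s B "{b..<c}" "{a..<c}"] by auto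
next
  case False
  then have z: "z1 \<in> cspan s B {a..<b}"
    using assms(1) by auto
  obtain ps where ps: "ps \<noteq> []" "admissible B {b..<c} ps" "\<forall>p\<in>set ps. snd p \<noteq> None"
    "map Some z2 = span_word s ps"
    using assms(2) unfolding cspan_iff by blast
  obtain qs where qs: "qs \<noteq> []" "admissible B {a..<b} qs" "\<forall>p\<in>set qs. snd p \<noteq> None"
    "map Some z1 = span_word s qs"
    using z unfolding cspan_iff by blast
  have "admissible B {a..<c} (qs @ ps)"
    using admissible_append_intervals[OF qs(2) ps(2)] admissible_interval_nonempty ps qs by fastforce
  moreover have "map Some (z1 @ z2) = span_word s (qs @ ps)"
    using ps(4) qs(4) by simp
  ultimately show ?thesis
    unfolding cspan_iff using ps qs by (intro exI[of _ "qs @ ps"]) auto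
qed

lemma admissible_subst:
  assumes adm: "admissible B I ps" and c: "c = None \<or> (\<exists>a\<in>A. c = Some a)" and A: "\<forall>l\<in>I. A \<subseteq> B l"
  shows "admissible B I (map (apsnd (case_option c Some)) ps)"
proof -
  have "case_option c Some c' = None \<or> (\<exists>a\<in>B l. case_option c Some c' = Some a)"
    if "(l, c') \<in> set ps" for l c'
  proof (cases c')
    case None
    then show ?thesis
      using adm c A that unfolding admissible_def by fastforce
  next
    case (Some a)
    then show ?thesis
      using adm that unfolding admissible_def by fastforce
  qed
  then show ?thesis
    using adm unfolding admissible_def by (auto simp: sorted_wrt_map case_prod_beta)
qed

lemma substc_vspan:
  assumes "w \<in> vspan s B I" and "\<forall>l\<in>I. a \<in> B l"
  shows "substc w a \<in> cspan s B I"
proof -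
  obtain ps where ps: "ps \<noteq> []" "admissible B I ps" "w = span_word s ps"
    using assms(1) unfolding vspan_eq by blast
  define qs where "qs = map (apsnd (case_option (Some a) Some)) ps"
  have "map Some (substc w a) = span_word s qs"
    unfolding map_Some_substc qs_def ps(3) by (rule substv_span_word)
  moreover have "admissible B I qs"
    unfolding qs_def using admissible_subst[OF ps(2), of "Some a" "{a}"] assms(2) by simp
  moreover have "\<forall>p\<in>set qs. snd p \<noteq> None"
    unfolding qs_def by (auto split: option.splits)
  ultimately show ?thesis
    unfolding cspan_iff using ps(1) qs_def by blast
qed

lemma vspan_in_varwords:
  assumes s: "s \<in> varseqs Al" and w: "w \<in> vspan s B I" and B: "\<forall>l\<in>I. B l \<subseteq> Alph Al"
  shows "w \<in> varwords Al"
proof -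
  obtain ps where ps: "admissible B I ps" "\<exists>l. (l, None) \<in> set ps" "w = span_word s ps"
    using w unfolding vspan_eq by blast
  obtain l0 where l0: "(l0, None) \<in> set ps"
    using ps(2) by blast
  have "None \<in> set (s l0)"
    using s unfolding varseqs_def varwords_def by blast
  then have "None \<in> set w"
    using l0 unfolding ps(3) span_word_def by force
  moreover have "b \<in> Alph Al" if "Some b \<in> set w" for b
  proof -
    from that obtain l c y where lc: "(l, c) \<in> set ps" and y: "y \<in> set (s l)"
      and b: "Some b = case_option c Some y"
      unfolding ps(3) span_word_def substv_def by auto
    show ?thesis
    proof (cases y)
      case None
      then have "c = Some b" and "l \<in> I" "c = None \<or> (\<exists>a \<in> B l. c = Some a)"
        using b lc ps(1) unfolding admissible_def by auto
      then show ?thesis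
        using B by auto
    next
      case (Some a)
      then have "Some b \<in> set (s l)"
        using y b by simp
      then show ?thesis
        using s unfolding varseqs_def varwords_def by blast
    qed
  qed
  ultimately show ?thesis
    unfolding varwords_def by blast
qed

lemma admissible_reindex:
  assumes "admissible B I ps" and "strict_mono_on I f" and "\<forall>l\<in>I. B l \<subseteq> B' (f l)"
  shows "admissible B' (f ` I) (map (apfst f) ps)"
proof -
  have sorted: "sorted_wrt (\<lambda>p q. fst p < fst q) ps"
    and elems: "\<forall>(l, c) \<in> set ps. l \<in> I \<and> (c = None \<or> (\<exists>a \<in> B l. c = Some a))"
    using assms(1) unfolding admissible_def by auto
  have "sorted_wrt (\<lambda>p q. fst p < fst q) (map (apfst f) ps)"
    unfolding sorted_wrt_map
  proof (rule sorted_wrt_mono_rel[OF _ sorted])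
    fix p q assume "p \<in> set ps" "q \<in> set ps" "fst p < fst q"
    then show "fst (apfst f p) < fst (apfst f q)"
      using elems strict_mono_onD[OF assms(2)] by (auto simp: apfst_def map_prod_def split: prod.splits)
  qed
  moreover have "\<forall>(l, c) \<in> set (map (apfst f) ps). l \<in> f ` I \<and> (c = None \<or> (\<exists>a \<in> B' l. c = Some a))"
    using elems assms(3) by fastforce
  ultimately show ?thesis
    unfolding admissible_def by blast
qed

lemma span_word_reindex:
  "\<forall>(l, c)\<in>set ps. s l = s' (f l) \<Longrightarrow> span_word s ps = span_word s' (map (apfst f) ps)"
  by (induction ps) auto

lemma vspan_reindex:
  assumes "w \<in> vspan s B I" and "strict_mono_on I f"
    and "\<forall>l\<in>I. s l = s' (f l) \<and> B l \<subseteq> B' (f l)"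
  shows "w \<in> vspan s' B' (f ` I)"
proof -
  obtain ps l where ps: "ps \<noteq> []" "admissible B I ps" "(l, None) \<in> set ps" "w = span_word s ps"
    using assms(1) unfolding vspan_eq by blast
  have "w = span_word s' (map (apfst f) ps)"
    using ps(2,4) assms(3) span_word_reindex[of ps s s' f] unfolding admissible_def by fastforce
  moreover have "(f l, None) \<in> set (map (apfst f) ps)"
    using ps(3) by force
  ultimately show ?thesis
    unfolding vspan_eq using ps(1) admissible_reindex[OF ps(2) assms(2)] assms(3) by blast
qed

lemma cspan_reindex:
  assumes "z \<in> cspan s B I" and "strict_mono_on I f"
    and "\<forall>l\<in>I. s l = s' (f l) \<and> B l \<subseteq> B' (f l)"
  shows "z \<in> cspan s' B' (f ` I)"
proof -
  obtain ps where ps: "ps \<noteq> []" "admissible B I ps" "\<forall>p\<in>set ps. snd p \<noteq> None"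
    "map Some z = span_word s ps"
    using assms(1) unfolding cspan_iff by blast
  have "map Some z = span_word s' (map (apfst f) ps)"
    using ps(2,4) assms(3) span_word_reindex[of ps s s' f] unfolding admissible_def by fastforce
  moreover have "\<forall>p\<in>set (map (apfst f) ps). snd p \<noteq> None"
    using ps(3) by auto
  ultimately show ?thesis
    unfolding cspan_iff using ps(1) admissible_reindex[OF ps(2) assms(2)] assms(3) by blast
qed

lemma vspan_shift:
  "w \<in> vspan (\<lambda>n. s (d + n)) (\<lambda>n. B (d + n)) I \<Longrightarrow> w \<in> vspan s B ((+) d ` I)"
  by (rule vspan_reindex) (auto simp: strict_mono_on_def)

lemma cspan_shift:
  "z \<in> cspan (\<lambda>n. s (d + n)) (\<lambda>n. B (d + n)) I \<Longrightarrow> z \<in> cspan s B ((+) d ` I)"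
  by (rule cspan_reindex) (auto simp: strict_mono_on_def)

lemma vspan_unshift:
  assumes "w \<in> vspan s B I" and "\<forall>l\<in>I. d \<le> l"
  shows "w \<in> vspan (\<lambda>n. s (d + n)) (\<lambda>n. B (d + n)) ((\<lambda>l. l - d) ` I)"
  using assms by (intro vspan_reindex) (auto simp: strict_mono_on_def)

definition compose_pairs ::
  "(nat \<Rightarrow> (nat \<times> 'a option) list) \<Rightarrow> (nat \<times> 'a option) list \<Rightarrow> (nat \<times> 'a option) list" where
  "compose_pairs qs ps = concat (map (\<lambda>(j, c). map (apsnd (case_option c Some)) (qs j)) ps)"

lemma compose_pairs_Cons [simp]:
  "compose_pairs qs ((j, c) # ps) = map (apsnd (case_option c Some)) (qs j) @ compose_pairs qs ps"
  by (simp add: compose_pairs_def)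

lemma set_compose_pairs: "p \<in> set (compose_pairs qs ps) \<longleftrightarrow>
    (\<exists>j c l c'. (j, c) \<in> set ps \<and> (l, c') \<in> set (qs j) \<and> p = (l, case_option c Some c'))"
  unfolding compose_pairs_def by force

lemma span_word_compose_pairs:
  "\<forall>(j, c) \<in> set ps. T j = span_word s (qs j) \<Longrightarrow> span_word T ps = span_word s (compose_pairs qs ps)"
  by (induction ps) (auto simp: substv_span_word compose_pairs_def)

lemma admissible_compose_pairs:
  assumes ps: "admissible B' I ps"
    and qs: "\<forall>j\<in>I. admissible B (J j) (qs j)"
    and JK: "\<forall>j\<in>I. J j \<subseteq> K"
    and ord: "\<forall>j\<in>I. \<forall>j'\<in>I. j < j' \<longrightarrow> (\<forall>x\<in>J j. \<forall>y\<in>J j'. x < y)"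
    and alph: "\<forall>j\<in>I. \<forall>l\<in>J j. B' j \<subseteq> B l"
  shows "admissible B K (compose_pairs qs ps)"
  using ps
proof (induction ps)
  case Nil
  then show ?case
    by (simp add: admissible_def compose_pairs_def)
next
  case (Cons p ps)
  obtain j c where p: "p = (j, c)"
    by (cases p)
  have adm_ps: "admissible B' I ps" and j: "j \<in> I" and c: "c = None \<or> (\<exists>a \<in> B' j. c = Some a)"
    and later: "\<forall>q\<in>set ps. j < fst q"
    using Cons.prems unfolding admissible_def p by auto
  define hd where "hd = map (apsnd (case_option c Some)) (qs j)"
  have adm_hd: "admissible B (J j) hd"
    unfolding hd_def using admissible_subst qs j c alph by blast
  have "\<exists>j'\<in>I. j < j' \<and> fst y \<in> J j'" if "y \<in> set (compose_pairs qs ps)" for y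
  proof -
    from that obtain j' c' l c'' where "(j', c') \<in> set ps" "(l, c'') \<in> set (qs j')"
      "y = (l, case_option c' Some c'')"
      unfolding set_compose_pairs by blast
    moreover have "j' \<in> I"
      using adm_ps calculation(1) unfolding admissible_def by auto
    ultimately show ?thesis
      using later qs unfolding admissible_def by fastforce
  qed
  then have before: "\<forall>x\<in>J j. \<forall>y\<in>fst ` set (compose_pairs qs ps). x < y"
    using ord j by fastforce
  have IH: "admissible B K (compose_pairs qs ps)"
    using Cons.IH[OF adm_ps] .
  then have "admissible B (fst ` set (compose_pairs qs ps)) (compose_pairs qs ps)"
    unfolding admissible_def by (auto intro: rev_image_eqI)
  then have "admissible B (J j \<union> fst ` set (compose_pairs qs ps)) (hd @ compose_pairs qs ps)"
    using admissible_append[OF adm_hd _ before] by blast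
  moreover have "J j \<union> fst ` set (compose_pairs qs ps) \<subseteq> K"
    using JK j IH unfolding admissible_def by auto
  ultimately show ?case
    unfolding p compose_pairs_Cons hd_def[symmetric] by (rule admissible_mono) auto
qed

lemma vspan_representatives:
  assumes "\<forall>j\<in>I. T j \<in> vspan s B (J j)"
  shows "\<exists>qs. \<forall>j\<in>I. qs j \<noteq> [] \<and> admissible B (J j) (qs j) \<and>
    (\<exists>l. (l, None) \<in> set (qs j)) \<and> T j = span_word s (qs j)"
proof -
  have "\<forall>j\<in>I. \<exists>q. q \<noteq> [] \<and> admissible B (J j) q \<and> (\<exists>l. (l, None) \<in> set q) \<and>
      T j = span_word s q"
    using assms unfolding vspan_eq by blast
  then show ?thesis
    by (rule bchoice)
qed

lemma vspan_compose:
  assumes w: "w \<in> vspan T B' I"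
    and T: "\<forall>j\<in>I. T j \<in> vspan s B (J j)"
    and JK: "\<forall>j\<in>I. J j \<subseteq> K"
    and ord: "\<forall>j\<in>I. \<forall>j'\<in>I. j < j' \<longrightarrow> (\<forall>x\<in>J j. \<forall>y\<in>J j'. x < y)"
    and alph: "\<forall>j\<in>I. \<forall>l\<in>J j. B' j \<subseteq> B l"
  shows "w \<in> vspan s B K"
proof -
  obtain ps j0 where ps: "ps \<noteq> []" "admissible B' I ps" "(j0, None) \<in> set ps" "w = span_word T ps"
    using w unfolding vspan_eq by blast
  obtain qs where qs: "\<forall>j\<in>I. qs j \<noteq> [] \<and> admissible B (J j) (qs j) \<and>
      (\<exists>l. (l, None) \<in> set (qs j)) \<and> T j = span_word s (qs j)"
    using vspan_representatives[OF T] by blast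
  have inI: "\<forall>(j, c)\<in>set ps. j \<in> I"
    using ps(2) unfolding admissible_def by auto
  have "w = span_word s (compose_pairs qs ps)"
    using ps(4) span_word_compose_pairs[of ps T s qs] qs inI by fastforce
  moreover have "admissible B K (compose_pairs qs ps)"
    using admissible_compose_pairs[OF ps(2) _ JK ord alph] qs by blast
  moreover obtain l where "(l, None) \<in> set (qs j0)"
    using qs ps(3) inI by fastforce
  then have "(l, None) \<in> set (compose_pairs qs ps)"
    using ps(3) unfolding set_compose_pairs by force
  ultimately show ?thesis
    unfolding vspan_eq by fastforce
qed

lemma cspan_compose:
  assumes z: "z \<in> cspan T B' I"
    and T: "\<forall>j\<in>I. T j \<in> vspan s B (J j)"
    and JK: "\<forall>j\<in>I. J j \<subseteq> K"
    and ord: "\<forall>j\<in>I. \<forall>j'\<in>I. j < j' \<longrightarrow> (\<forall>x\<in>J j. \<forall>y\<in>J j'. x < y)"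
    and alph: "\<forall>j\<in>I. \<forall>l\<in>J j. B' j \<subseteq> B l"
  shows "z \<in> cspan s B K"
proof -
  obtain ps where ps: "ps \<noteq> []" "admissible B' I ps" "\<forall>p\<in>set ps. snd p \<noteq> None"
    "map Some z = span_word T ps"
    using z unfolding cspan_iff by blast
  obtain qs where qs: "\<forall>j\<in>I. qs j \<noteq> [] \<and> admissible B (J j) (qs j) \<and>
      (\<exists>l. (l, None) \<in> set (qs j)) \<and> T j = span_word s (qs j)"
    using vspan_representatives[OF T] by blast
  have inI: "\<forall>(j, c)\<in>set ps. j \<in> I"
    using ps(2) unfolding admissible_def by auto
  have "map Some z = span_word s (compose_pairs qs ps)"
    using ps(4) span_word_compose_pairs[of ps T s qs] qs inI by fastforce
  moreover have "admissible B K (compose_pairs qs ps)"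
    using admissible_compose_pairs[OF ps(2) _ JK ord alph] qs by blast
  moreover have "compose_pairs qs ps \<noteq> []"
    using ps(1) qs inI by (cases ps) fastforce+
  moreover have "\<forall>p\<in>set (compose_pairs qs ps). snd p \<noteq> None"
  proof
    fix p assume "p \<in> set (compose_pairs qs ps)"
    then obtain j c l c' where "(j, c) \<in> set ps" and "p = (l, case_option c Some c')"
      unfolding set_compose_pairs by blast
    with ps(3) show "snd p \<noteq> None"
      by (cases c') force+
  qed
  ultimately show ?thesis
    unfolding cspan_iff by blast
qed

subsection \<open>Words along a combinatorial line\<close>

definition line_word :: "(nat \<Rightarrow> 'a option list) \<Rightarrow> 'a option list \<Rightarrow> 'a option list" where
  "line_word T ln = span_word T (map (\<lambda>j. (j, ln ! j)) [0..<length ln])"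

lemma line_word_vspan:
  assumes "ln \<in> lines L N"
  shows "line_word T ln \<in> vspan T (\<lambda>_. L) {0..<N}"
proof -
  have len: "length ln = N" and "None \<in> set ln" and letters: "\<forall>y. Some y \<in> set ln \<longrightarrow> y \<in> L"
    using assms unfolding lines_def by auto
  then obtain j where j: "j < N" "ln ! j = None"
    unfolding in_set_conv_nth by blast
  define ps where "ps = map (\<lambda>j. (j, ln ! j)) [0..<N]"
  have "c = None \<or> (\<exists>a\<in>L. c = Some a)" if "(l, c) \<in> set ps" for l c
  proof -
    have "c \<in> set ln"
      using that len unfolding ps_def by auto
    show ?thesis
    proof (cases c)
      case (Some y)
      with \<open>c \<in> set ln\<close> letters show ?thesis
        by auto
    qed simp
  qed
  then have "admissible (\<lambda>_. L) {0..<N} ps"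
    unfolding admissible_def by (auto simp: ps_def sorted_wrt_map)
  moreover have "(j, None) \<in> set ps" and "ps \<noteq> []"
    unfolding ps_def using j by force+
  ultimately show ?thesis
    unfolding vspan_eq line_word_def len ps_def by blast
qed

definition line_point :: "(nat \<Rightarrow> 'a option list) \<Rightarrow> 'a list \<Rightarrow> 'a list" where
  "line_point T c = concat (map (\<lambda>j. substc (T j) (c ! j)) [0..<length c])"

lemma substc_line_word: "substc (line_word T ln) a = line_point T (substc ln a)"
proof -
  have "substc (substv (T j) (ln ! j)) a = substc (T j) (substc ln a ! j)" if "j < length ln" for j
    using that by (simp add: substc_substv substc_def[of ln])
  then show ?thesis
    unfolding line_word_def span_word_def line_point_def substc_concat
    by (auto intro!: arg_cong[where f = concat])
qed

section \<open>Extracted subsequences\<close>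

lemma increasing_prefix_le:
  assumes "\<forall>j<q. m j < m (Suc j)" and "i \<le> j" and "j \<le> q"
  shows "m i \<le> (m j :: nat)"
  by (rule lift_Suc_mono_le_ivl[of "{..<q}"]) (use assms in auto)

lemma increasing_prefix_less:
  assumes "\<forall>j<q. m j < m (Suc j)" and "i < j" and "j \<le> q"
  shows "m i < (m j :: nat)"
  by (rule lift_Suc_mono_less_ivl[of "{..<q}"]) (use assms in auto)

lemma increasing_prefix_ge_index:
  assumes "\<forall>j<q. m j < m (Suc j)" and "i \<le> q"
  shows "m 0 + i \<le> (m i :: nat)"
  using assms(2)
proof (induction i)
  case (Suc i)
  then have "m 0 + i \<le> m i" and "m i < m (Suc i)"
    using assms(1) by auto
  then show ?case
    by simp
qed simp

lemma block_intervals: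
  assumes m0: "m 0 = 0" and inc: "\<forall>j<q. m j < m (Suc j)" and B: "mono B"
  shows "\<forall>j\<in>{p..<q}. {m j..<m (Suc j)} \<subseteq> {m p..<m q}"
    and "\<forall>j\<in>{p..<q}. \<forall>j'\<in>{p..<q}. j < j' \<longrightarrow> (\<forall>x\<in>{m j..<m (Suc j)}. \<forall>y\<in>{m j'..<m (Suc j')}. x < y)"
    and "\<forall>j\<in>{p..<q}. \<forall>l\<in>{m j..<m (Suc j)}. B j \<subseteq> B l"
proof -
  show "\<forall>j\<in>{p..<q}. {m j..<m (Suc j)} \<subseteq> {m p..<m q}"
  proof
    fix j assume "j \<in> {p..<q}"
    then have "m p \<le> m j" and "m (Suc j) \<le> m q"
      using increasing_prefix_le[OF inc, of p j] increasing_prefix_le[OF inc, of "Suc j" q] by auto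
    then show "{m j..<m (Suc j)} \<subseteq> {m p..<m q}"
      by auto
  qed
  show "\<forall>j\<in>{p..<q}. \<forall>j'\<in>{p..<q}. j < j' \<longrightarrow> (\<forall>x\<in>{m j..<m (Suc j)}. \<forall>y\<in>{m j'..<m (Suc j')}. x < y)"
  proof (intro ballI impI)
    fix j j' x y
    assume "j \<in> {p..<q}" "j' \<in> {p..<q}" "j < j'" "x \<in> {m j..<m (Suc j)}" "y \<in> {m j'..<m (Suc j')}"
    moreover have "m (Suc j) \<le> m j'"
      using increasing_prefix_le[OF inc, of "Suc j" j'] calculation by auto
    ultimately show "x < y"
      by auto
  qed
  show "\<forall>j\<in>{p..<q}. \<forall>l\<in>{m j..<m (Suc j)}. B j \<subseteq> B l"
  proof (intro ballI)
    fix j l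
    assume "j \<in> {p..<q}" "l \<in> {m j..<m (Suc j)}"
    then have "j \<le> l"
      using increasing_prefix_ge_index[OF inc, of j] m0 by auto
    then show "B j \<subseteq> B l"
      using monoD[OF B] by blast
  qed
qed

lemma vspan_blocks:
  assumes "m 0 = 0" and "\<forall>j<q. m j < m (Suc j)" and "mono B"
    and "\<forall>j\<in>{p..<q}. T j \<in> vspan u B {m j..<m (Suc j)}" and "w \<in> vspan T B {p..<q}"
  shows "w \<in> vspan u B {m p..<m q}"
  using vspan_compose[OF assms(5,4) block_intervals[OF assms(1-3)]] .

lemma cspan_blocks:
  assumes "m 0 = 0" and "\<forall>j<q. m j < m (Suc j)" and "mono B"
    and "\<forall>j\<in>{p..<q}. T j \<in> vspan u B {m j..<m (Suc j)}" and "z \<in> cspan T B {p..<q}"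
  shows "z \<in> cspan u B {m p..<m q}"
  using cspan_compose[OF assms(5,4) block_intervals[OF assms(1-3)]] .

lemma cspan_bounded: "z \<in> cspan t B UNIV \<Longrightarrow> \<exists>q. z \<in> cspan t B {0..<q}"
proof -
  assume "z \<in> cspan t B UNIV"
  then obtain ps where ps: "ps \<noteq> []" "admissible B UNIV ps" "\<forall>p\<in>set ps. snd p \<noteq> None"
    "map Some z = span_word t ps"
    unfolding cspan_iff by blast
  have "l \<le> Max (fst ` set ps)" if "(l, c) \<in> set ps" for l c
    using that by (intro Max_ge) force+
  then have "admissible B {0..<Suc (Max (fst ` set ps))} ps"
    using ps(2) unfolding admissible_def by (auto simp: less_Suc_eq_le)
  then show ?thesis
    unfolding cspan_iff using ps by blast
qed

definition blocks ::
  "(nat \<Rightarrow> 'a set) \<Rightarrow> nat \<Rightarrow> (nat \<Rightarrow> 'a option list) \<Rightarrow> nat \<Rightarrow> (nat \<Rightarrow> 'a option list) \<Rightarrow>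
    (nat \<Rightarrow> nat) \<Rightarrow> bool" where
  "blocks Al K t N s m \<longleftrightarrow> m 0 = 0 \<and>
     (\<forall>i<N. m i < m (Suc i) \<and> t i \<in> vspan s (\<lambda>n. Al (K + n)) {m i..<m (Suc i)})"

lemma extracted_iff_blocks: "extracted Al K t s \<longleftrightarrow> (\<forall>N. \<exists>m. blocks Al K t N s m)"
proof
  assume ext: "extracted Al K t s"
  show "\<forall>N. \<exists>m. blocks Al K t N s m"
  proof
    fix N
    show "\<exists>m. blocks Al K t N s m"
    proof (cases N)
      case 0
      have "blocks Al K t 0 s (\<lambda>_. 0)"
        unfolding blocks_def by simp
      with 0 show ?thesis
        by blast
    next
      case (Suc l)
      obtain m where "m 0 = 0" and "\<forall>i\<le>l. m i < m (Suc i)"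
        and "\<forall>i\<le>l. t i \<in> vspan s (\<lambda>n. Al (K + n)) {m i..<m (Suc i)}"
        using ext unfolding extracted_def extracted_fin_def by blast
      then have "blocks Al K t (Suc l) s m"
        unfolding blocks_def less_Suc_eq_le by blast
      with Suc show ?thesis
        by blast
    qed
  qed
next
  assume all: "\<forall>N. \<exists>m. blocks Al K t N s m"
  show "extracted Al K t s"
    unfolding extracted_def
  proof
    fix l
    obtain m where "blocks Al K t (Suc l) s m"
      using all by blast
    then show "extracted_fin Al K t l s"
      unfolding extracted_fin_def blocks_def less_Suc_eq_le by blast
  qed
qed

lemma blocks_le: "blocks Al K t N s m \<Longrightarrow> N' \<le> N \<Longrightarrow> blocks Al K t N' s m"
  unfolding blocks_def by auto

lemma extracted_refl: "extracted Al K s s"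
proof -
  have "s i \<in> vspan s (\<lambda>n. Al (K + n)) {i..<Suc i}" for i
  proof -
    have "admissible (\<lambda>n. Al (K + n)) {i..<Suc i} [(i, None)]"
      unfolding admissible_def by simp
    then show ?thesis
      unfolding vspan_eq by (intro CollectI exI[of _ "[(i, None)]"]) auto
  qed
  then have "blocks Al K s N s id" for N
    unfolding blocks_def by simp
  then show ?thesis
    unfolding extracted_iff_blocks by blast
qed

lemma extracted_trans:
  assumes "mono Al" and tu: "extracted Al K t u" and uw: "extracted Al K u w"
  shows "extracted Al K t w"
  unfolding extracted_iff_blocks
proof
  fix N
  obtain m where m: "blocks Al K t N u m"
    using tu unfolding extracted_iff_blocks by blast
  obtain m' where m': "blocks Al K u (m N) w m'"
    using uw unfolding extracted_iff_blocks by blast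
  have m0: "m 0 = 0" and inc: "\<forall>i<N. m i < m (Suc i)"
    and t: "\<forall>i<N. t i \<in> vspan u (\<lambda>n. Al (K + n)) {m i..<m (Suc i)}"
    using m unfolding blocks_def by auto
  have m'0: "m' 0 = 0" and inc': "\<forall>j<m N. m' j < m' (Suc j)"
    and u: "\<forall>j<m N. u j \<in> vspan w (\<lambda>n. Al (K + n)) {m' j..<m' (Suc j)}"
    using m' unfolding blocks_def by auto
  have mono_alph: "mono (\<lambda>n. Al (K + n))"
    using \<open>mono Al\<close> by (simp add: mono_def)
  have "blocks Al K t N w (m' \<circ> m)"
    unfolding blocks_def
  proof (intro conjI allI impI)
    show "(m' \<circ> m) 0 = 0"
      using m0 m'0 by simp
  next
    fix i assume "i < N"
    then have mi: "m i < m (Suc i)" and le: "m (Suc i) \<le> m N"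
      using inc increasing_prefix_le[OF inc, of "Suc i" N] by auto
    show "(m' \<circ> m) i < (m' \<circ> m) (Suc i)"
      using increasing_prefix_less[OF inc' mi le] by simp
    have "\<forall>j<m (Suc i). m' j < m' (Suc j)"
      using inc' le by auto
    moreover have "\<forall>j\<in>{m i..<m (Suc i)}. u j \<in> vspan w (\<lambda>n. Al (K + n)) {m' j..<m' (Suc j)}"
      using u le by auto
    ultimately show "t i \<in> vspan w (\<lambda>n. Al (K + n)) {(m' \<circ> m) i..<(m' \<circ> m) (Suc i)}"
      using vspan_blocks[where m = m' and B = "\<lambda>n. Al (K + n)", OF m'0 _ mono_alph] t \<open>i < N\<close> by simp
  qed
  then show "\<exists>m. blocks Al K t N w m"
    by blast
qed

lemma extracted_shift:
  assumes "extracted Al (K + d) t (\<lambda>n. u (d + n))"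
  shows "extracted Al K t u"
  unfolding extracted_iff_blocks
proof
  fix N
  obtain m where "blocks Al (K + d) t N (\<lambda>n. u (d + n)) m"
    using assms unfolding extracted_iff_blocks by blast
  then have inc: "\<forall>i<N. m i < m (Suc i)"
    and t: "\<forall>i<N. t i \<in> vspan (\<lambda>n. u (d + n)) (\<lambda>n. Al (K + (d + n))) {m i..<m (Suc i)}"
    unfolding blocks_def by (simp_all add: add.assoc)
  define m' where "m' i = (if i = 0 then 0 else d + m i)" for i
  have "blocks Al K t N u m'"
    unfolding blocks_def
  proof (intro conjI allI impI)
    show "m' 0 = 0"
      by (simp add: m'_def)
  next
    fix i assume "i < N"
    then show "m' i < m' (Suc i)"
      using inc unfolding m'_def by auto
    have "t i \<in> vspan u (\<lambda>n. Al (K + n)) ((+) d ` {m i..<m (Suc i)})"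
      by (rule vspan_shift[where B = "\<lambda>n. Al (K + n)"]) (use t \<open>i < N\<close> in simp)
    then show "t i \<in> vspan u (\<lambda>n. Al (K + n)) {m' i..<m' (Suc i)}"
      by (rule vspan_mono) (auto simp: m'_def)
  qed
  then show "\<exists>m. blocks Al K t N u m"
    by blast
qed

lemma cspan_extracted_subset:
  assumes "mono Al" and "extracted Al K t u"
  shows "cspan t (\<lambda>n. Al (K + n)) UNIV \<subseteq> cspan u (\<lambda>n. Al (K + n)) UNIV"
proof
  fix z assume "z \<in> cspan t (\<lambda>n. Al (K + n)) UNIV"
  then obtain q where z: "z \<in> cspan t (\<lambda>n. Al (K + n)) {0..<q}"
    using cspan_bounded by blast
  obtain m where m0: "m 0 = 0" and inc: "\<forall>i<q. m i < m (Suc i)"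
    and t: "\<forall>i<q. t i \<in> vspan u (\<lambda>n. Al (K + n)) {m i..<m (Suc i)}"
    using assms(2) unfolding extracted_iff_blocks blocks_def by blast
  have mono_alph: "mono (\<lambda>n. Al (K + n))"
    using \<open>mono Al\<close> by (simp add: mono_def)
  have "z \<in> cspan u (\<lambda>n. Al (K + n)) {m 0..<m q}"
    using cspan_blocks[where m = m and B = "\<lambda>n. Al (K + n)", OF m0 inc mono_alph _ z] t by simp
  then show "z \<in> cspan u (\<lambda>n. Al (K + n)) UNIV"
    by (rule cspan_mono) auto
qed

lemma blocks_drop:
  assumes m: "blocks Al K t (p + N) u m" and d: "d \<le> m p"
  shows "blocks Al (K + d) (\<lambda>n. t (p + n)) N (\<lambda>n. u (d + n))
    (\<lambda>j. if j = 0 then 0 else m (p + j) - d)"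
  unfolding blocks_def
proof (intro conjI allI impI)
  have inc: "\<forall>i<p + N. m i < m (Suc i)"
    and t: "\<forall>i<p + N. t i \<in> vspan u (\<lambda>n. Al (K + n)) {m i..<m (Suc i)}"
    using m unfolding blocks_def by auto
  have ge: "d \<le> m (p + i)" if "i \<le> N" for i
    using d increasing_prefix_le[OF inc, of p "p + i"] that by auto
  fix i assume "i < N"
  then have "m (p + i) < m (p + Suc i)"
    using inc by auto
  then show "(if i = 0 then 0 else m (p + i) - d) < (if Suc i = 0 then 0 else m (p + Suc i) - d)"
    using ge[of i] \<open>i < N\<close> by auto
  have "t (p + i) \<in> vspan u (\<lambda>n. Al (K + n)) {m (p + i)..<m (Suc (p + i))}"
    using t \<open>i < N\<close> by auto
  moreover have "\<forall>l\<in>{m (p + i)..<m (Suc (p + i))}. d \<le> l"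
    using ge[of i] \<open>i < N\<close> by auto
  ultimately have "t (p + i) \<in> vspan (\<lambda>n. u (d + n)) (\<lambda>n. Al (K + (d + n)))
      ((\<lambda>l. l - d) ` {m (p + i)..<m (Suc (p + i))})"
    by (rule vspan_unshift)
  then show "t (p + i) \<in> vspan (\<lambda>n. u (d + n)) (\<lambda>n. Al (K + d + n))
      {if i = 0 then 0 else m (p + i) - d..<if Suc i = 0 then 0 else m (p + Suc i) - d}"
    by (rule vspan_mono) (use ge[of i] \<open>i < N\<close> in \<open>auto simp: add.assoc\<close>)
qed simp

text \<open>Choosing the blocks of the first p terms to end as early as possible makes the
  remaining terms an extracted sequence of what is left of u.\<close>

lemma extracted_tail:
  assumes "extracted Al K t u"
  obtains m where "blocks Al K t p u m"
    and "extracted Al (K + m p) (\<lambda>n. t (p + n)) (\<lambda>n. u (m p + n))"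
proof -
  obtain m0 where "blocks Al K t p u m0"
    using assms unfolding extracted_iff_blocks by blast
  then obtain m where m: "blocks Al K t p u m"
    and least: "\<And>m'. blocks Al K t p u m' \<Longrightarrow> m p \<le> m' p"
    using ex_has_least_nat[of "\<lambda>m. blocks Al K t p u m" m0 "\<lambda>m. m p"] by blast
  have "\<exists>m'. blocks Al (K + m p) (\<lambda>n. t (p + n)) N (\<lambda>n. u (m p + n)) m'" for N
  proof -
    obtain m' where m': "blocks Al K t (p + N) u m'"
      using assms unfolding extracted_iff_blocks by blast
    then have "m p \<le> m' p"
      using least blocks_le by fastforce
    then show ?thesis
      using blocks_drop[OF m'] by blast
  qed
  then show ?thesis
    using that m unfolding extracted_iff_blocks by blast
qed

lemma mono_line_prefix_colouring:
  assumes "mono_line (\<lambda>c. {P \<in> Pre. P @ line_point T c @ z \<in> E}) L ln"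
    and "P \<in> Pre" and "a \<in> L" and "a' \<in> L" and "P @ substc (line_word T ln) a @ z \<in> E"
  shows "P @ substc (line_word T ln) a' @ z \<in> E"
  using assms unfolding mono_line_def substc_line_word by blast

text \<open>The hypotheses of the theorem together with the negation of its conclusion; the
  locale derives a contradiction.\<close>

locale lemma3p8_counterexample =
  fixes Al :: "nat \<Rightarrow> 'a set" and k :: nat and E :: "'a list set" and s :: "nat \<Rightarrow> 'a option list"
  assumes finite_Al: "\<And>n. finite (Al n)" and Al_nonempty: "\<And>n. Al n \<noteq> {}" and mono_Al: "mono Al"
    and E_words: "E \<subseteq> words Al" and s_varseq: "s \<in> varseqs Al" and large_E: "large Al k E s"
    and not_large: "\<And>m w t. 1 \<le> m \<Longrightarrow> w \<in> vspan s (\<lambda>n. Al (k + n)) {0..<m} \<Longrightarrow> t \<in> varseqs Al \<Longrightarrow>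
       extracted Al (k + m) t (\<lambda>n. s (m + n)) \<Longrightarrow>
       \<not> large Al (k + m) (E \<inter> shiftset Al E {substc w a | a. a \<in> Al k}) t"
begin

abbreviation alph :: "nat \<Rightarrow> 'a set" where
  "alph n \<equiv> Al (k + n)"

lemma Al_mono: "i \<le> j \<Longrightarrow> Al i \<subseteq> Al j"
  using monoD[OF mono_Al] .

lemma alph_subset_shift: "alph n \<subseteq> Al (k + d + n)"
  by (rule Al_mono) simp

lemma mono_Al_shift: "mono (\<lambda>n. Al (d + n))"
  by (simp add: mono_def Al_mono)

lemma avoiding_refinement:
  assumes "finite W" and W: "W \<subseteq> vspan s alph {0..<M}" and "1 \<le> M"
    and R: "R \<in> varseqs Al" "extracted Al (k + M) R (\<lambda>n. s (M + n))"
  shows "\<exists>R'. R' \<in> varseqs Al \<and> extracted Al (k + M) R' R \<and>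
    (\<forall>w\<in>W. E \<inter> shiftset Al E {substc w a | a. a \<in> Al k} \<inter> cspan R' (\<lambda>n. Al (k + M + n)) UNIV = {})"
  using \<open>finite W\<close> W
proof (induction W rule: finite_induct)
  case empty
  show ?case
    using R(1) extracted_refl by blast
next
  case (insert w W)
  then obtain R1 where R1: "R1 \<in> varseqs Al" "extracted Al (k + M) R1 R"
    and avoid: "\<forall>w'\<in>W. E \<inter> shiftset Al E {substc w' a | a. a \<in> Al k} \<inter>
      cspan R1 (\<lambda>n. Al (k + M + n)) UNIV = {}"
    by auto
  have "extracted Al (k + M) R1 (\<lambda>n. s (M + n))"
    using extracted_trans[OF mono_Al R1(2) R(2)] .
  then have "\<not> large Al (k + M) (E \<inter> shiftset Al E {substc w a | a. a \<in> Al k}) R1"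
    using not_large[OF \<open>1 \<le> M\<close> _ R1(1)] insert.prems by blast
  then obtain u where u: "u \<in> varseqs Al" "extracted Al (k + M) u R1"
    and "E \<inter> shiftset Al E {substc w a | a. a \<in> Al k} \<inter> cspan u (\<lambda>n. Al (k + M + n)) UNIV = {}"
    unfolding large_def by blast
  moreover have "cspan u (\<lambda>n. Al (k + M + n)) UNIV \<subseteq> cspan R1 (\<lambda>n. Al (k + M + n)) UNIV"
    using cspan_extracted_subset[OF mono_Al u(2)] .
  ultimately show ?case
    using avoid extracted_trans[OF mono_Al u(2) R1(2)] by blast
qed

text \<open>First refine R, one w \<in> W at a time, so that its constant span misses every
  E \<inter> E_F with F = {w(a) | a \<in> A_k}; largeness of E then supplies z.\<close>

lemma avoiding_word:
  assumes "finite W" and "W \<subseteq> vspan s alph {0..<M}" and "1 \<le> M"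
    and "R \<in> varseqs Al" and "extracted Al (k + M) R (\<lambda>n. s (M + n))"
  obtains R' z where "R' \<in> varseqs Al" and "extracted Al (k + M) R' R"
    and "z \<in> cspan R' alph UNIV" and "\<And>w. w \<in> W \<Longrightarrow> \<exists>a\<in>Al k. substc w a @ z \<notin> E"
proof -
  obtain R' where R': "R' \<in> varseqs Al" "extracted Al (k + M) R' R"
    and avoid: "\<forall>w\<in>W. E \<inter> shiftset Al E {substc w a | a. a \<in> Al k} \<inter>
      cspan R' (\<lambda>n. Al (k + M + n)) UNIV = {}"
    using avoiding_refinement[OF assms] by blast
  have "extracted Al (k + M) R' (\<lambda>n. s (M + n))"
    using extracted_trans[OF mono_Al R'(2) assms(5)] .
  then have "extracted Al k R' s"
    by (rule extracted_shift)
  then obtain z where z: "z \<in> E" "z \<in> cspan R' alph UNIV"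
    using large_E R'(1) unfolding large_def by blast
  have "z \<in> cspan R' (\<lambda>n. Al (k + M + n)) UNIV"
    using z(2) by (rule cspan_mono) (simp_all add: alph_subset_shift)
  moreover have "z \<in> words Al"
    using z(1) E_words by blast
  ultimately have "\<exists>a\<in>Al k. substc w a @ z \<notin> E" if "w \<in> W" for w
    using avoid that z(1) unfolding shiftset_def by blast
  with R' z show ?thesis
    using that by blast
qed

lemma line_word_in_vspan:
  assumes "i \<le> M" and m: "blocks Al (k + M) T N (\<lambda>n. s (M + n)) m" and "ln \<in> lines (Al (k + i)) N"
  shows "line_word T ln \<in> vspan s alph {M..<M + m N}"
proof -
  have m0: "m 0 = 0" and inc: "\<forall>j<N. m j < m (Suc j)"
    and T: "\<forall>j\<in>{0..<N}. T j \<in> vspan (\<lambda>n. s (M + n)) (\<lambda>n. Al (k + M + n)) {m j..<m (Suc j)}"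
    using m unfolding blocks_def by auto
  have "line_word T ln \<in> vspan T (\<lambda>_. Al (k + i)) {0..<N}"
    using assms(3) by (rule line_word_vspan)
  then have "line_word T ln \<in> vspan T (\<lambda>n. Al (k + M + n)) {0..<N}"
    by (rule vspan_mono) (use assms(1) in \<open>simp_all add: Al_mono\<close>)
  then have "line_word T ln \<in> vspan (\<lambda>n. s (M + n)) (\<lambda>n. Al (k + M + n)) {m 0..<m N}"
    using vspan_blocks[where m = m and B = "\<lambda>n. Al (k + M + n)", OF m0 inc mono_Al_shift T] by blast
  then have "line_word T ln \<in> vspan (\<lambda>n. s (M + n)) (\<lambda>n. alph (M + n)) {0..<m N}"
    using m0 by (simp add: add.assoc)
  then have "line_word T ln \<in> vspan s alph ((+) M ` {0..<m N})"
    by (rule vspan_shift)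
  moreover have "(+) M ` {0..<m N} = {M..<M + m N}"
    by (simp add: add.commute)
  ultimately show ?thesis
    by simp
qed

lemma prefixed_line_words_in_vspan:
  assumes "i \<le> M" and m: "blocks Al (k + M) T N (\<lambda>n. s (M + n)) m"
    and Pre: "Pre \<subseteq> insert [] (cspan s alph {0..<M})"
  shows "(\<lambda>(P, ln). map Some P @ line_word T ln) ` (Pre \<times> lines (Al (k + i)) N) \<subseteq>
    vspan s alph {0..<M + m N}"
proof clarify
  fix P ln assume "P \<in> Pre" and ln: "ln \<in> lines (Al (k + i)) N"
  then have "P \<in> insert [] (cspan s alph {0..<M})"
    using Pre by blast
  from cspan_append_vspan[OF this line_word_in_vspan[OF \<open>i \<le> M\<close> m ln]]
  show "map Some P @ line_word T ln \<in> vspan s alph {0..<M + m N}"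
    by simp
qed

lemma cspan_prefix_split:
  assumes "R \<in> varseqs Al" and R: "extracted Al (k + M) R (\<lambda>n. s (M + n))" and z: "z \<in> cspan R alph UNIV"
  obtains M' R' where "M \<le> M'" and "z \<in> cspan s alph {M..<M'}"
    and "R' \<in> varseqs Al" and "extracted Al (k + M') R' (\<lambda>n. s (M' + n))"
proof -
  obtain q where "z \<in> cspan R alph {0..<q}"
    using cspan_bounded[OF z] by blast
  then have zq: "z \<in> cspan R (\<lambda>n. Al (k + M + n)) {0..<q}"
    by (rule cspan_mono) (simp_all add: alph_subset_shift)
  obtain m where m: "blocks Al (k + M) R q (\<lambda>n. s (M + n)) m"
    and tail: "extracted Al (k + M + m q) (\<lambda>n. R (q + n)) (\<lambda>n. s (M + (m q + n)))"
    using extracted_tail[OF R] by blast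
  have m0: "m 0 = 0" and inc: "\<forall>j<q. m j < m (Suc j)"
    and T: "\<forall>j\<in>{0..<q}. R j \<in> vspan (\<lambda>n. s (M + n)) (\<lambda>n. Al (k + M + n)) {m j..<m (Suc j)}"
    using m unfolding blocks_def by auto
  have "z \<in> cspan (\<lambda>n. s (M + n)) (\<lambda>n. Al (k + M + n)) {m 0..<m q}"
    using cspan_blocks[where m = m and B = "\<lambda>n. Al (k + M + n)", OF m0 inc mono_Al_shift T zq] .
  then have "z \<in> cspan (\<lambda>n. s (M + n)) (\<lambda>n. alph (M + n)) {0..<m q}"
    using m0 by (simp add: add.assoc)
  then have "z \<in> cspan s alph ((+) M ` {0..<m q})"
    by (rule cspan_shift)
  moreover have "(+) M ` {0..<m q} = {M..<M + m q}"
    by (simp add: add.commute)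
  ultimately have "z \<in> cspan s alph {M..<M + m q}"
    by simp
  moreover have "extracted Al (k + (M + m q)) (\<lambda>n. R (q + n)) (\<lambda>n. s (M + m q + n))"
    using tail by (simp add: add.assoc)
  moreover have "(\<lambda>n. R (q + n)) \<in> varseqs Al"
    using \<open>R \<in> varseqs Al\<close> unfolding varseqs_def by blast
  ultimately show ?thesis
    using that[of "M + m q"] by auto
qed

subsection \<open>The inductive construction\<close>

text \<open>At stage i the blocks built so far occupy the first M terms of s, T is an extracted
  sequence of the remaining terms, and Pre collects the constant words spanned by the
  blocks (including the empty word).\<close>

definition stage :: "nat \<Rightarrow> nat \<Rightarrow> (nat \<Rightarrow> 'a option list) \<Rightarrow> 'a list set \<Rightarrow> bool" where
  "stage i M T Pre \<longleftrightarrow> i \<le> M \<and> T \<in> varseqs Al \<and> extracted Al (k + M) T (\<lambda>n. s (M + n)) \<and>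
     finite Pre \<and> [] \<in> Pre \<and> Pre \<subseteq> insert [] (cspan s alph {0..<M})"

definition extend_prefixes :: "'a list set \<Rightarrow> 'a option list \<Rightarrow> nat \<Rightarrow> 'a list set" where
  "extend_prefixes Pre v i = Pre \<union> {P @ substc v a | P a. P \<in> Pre \<and> a \<in> Al (k + i)}"

definition good_block :: "nat \<Rightarrow> nat \<Rightarrow> 'a list set \<Rightarrow> 'a option list \<Rightarrow> nat \<Rightarrow> bool" where
  "good_block i M Pre v M' \<longleftrightarrow> M < M' \<and> v \<in> vspan s alph {M..<M'} \<and>
     (\<forall>P\<in>Pre. \<forall>a\<in>Al (k + i). P @ substc v a \<notin> E)"

lemma stage_extend:
  assumes "stage i M T Pre" and "good_block i M Pre v M'"
    and "T' \<in> varseqs Al" and "extracted Al (k + M') T' (\<lambda>n. s (M' + n))"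
  shows "stage (Suc i) M' T' (extend_prefixes Pre v i)"
proof -
  have iM: "i \<le> M" and "finite Pre" and "[] \<in> Pre" and Pre: "Pre \<subseteq> insert [] (cspan s alph {0..<M})"
    using assms(1) unfolding stage_def by auto
  have MM': "M < M'" and v: "v \<in> vspan s alph {M..<M'}"
    using assms(2) unfolding good_block_def by auto
  have "{P @ substc v a | P a. P \<in> Pre \<and> a \<in> Al (k + i)} = (\<lambda>(P, a). P @ substc v a) ` (Pre \<times> Al (k + i))"
    by auto
  then have "finite (extend_prefixes Pre v i)"
    unfolding extend_prefixes_def using \<open>finite Pre\<close> finite_Al by simp
  moreover have "P @ substc v a \<in> cspan s alph {0..<M'}" if "P \<in> Pre" "a \<in> Al (k + i)" for P a
  proof -
    have "\<forall>l\<in>{M..<M'}. a \<in> alph l"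
    proof
      fix l assume "l \<in> {M..<M'}"
      then show "a \<in> alph l"
        using that(2) iM Al_mono[of "k + i" "k + l"] by auto
    qed
    then have "substc v a \<in> cspan s alph {M..<M'}"
      by (rule substc_vspan[OF v])
    then show ?thesis
      using cspan_append_cspan[of P s alph 0 M] Pre that(1) by blast
  qed
  moreover have "insert [] (cspan s alph {0..<M}) \<subseteq> insert [] (cspan s alph {0..<M'})"
    using MM' cspan_mono[of _ s alph "{0..<M}" "{0..<M'}"] by auto
  ultimately show ?thesis
    using assms(3,4) iM MM' \<open>[] \<in> Pre\<close> Pre unfolding stage_def extend_prefixes_def by auto
qed

lemma good_block_from_line:
  assumes "i \<le> M" and m: "blocks Al (k + M) T N (\<lambda>n. s (M + n)) m"
    and HJ: "\<And>\<chi>::'a list \<Rightarrow> 'a list set. \<chi> ` cube (Al (k + i)) N \<subseteq> Pow Pre \<Longrightarrow>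
      \<exists>ln\<in>lines (Al (k + i)) N. mono_line \<chi> (Al (k + i)) ln"
    and "0 < m N" and z: "z \<in> cspan s alph {M + m N..<M'}"
    and avoid: "\<And>P ln. P \<in> Pre \<Longrightarrow> ln \<in> lines (Al (k + i)) N \<Longrightarrow>
      \<exists>a\<in>Al k. P @ substc (line_word T ln) a @ z \<notin> E"
  shows "\<exists>v. good_block i M Pre v M'"
proof -
  define \<chi> where "\<chi> c = {P \<in> Pre. P @ line_point T c @ z \<in> E}" for c
  obtain ln where ln: "ln \<in> lines (Al (k + i)) N" and mono: "mono_line \<chi> (Al (k + i)) ln"
    using HJ[of \<chi>] unfolding \<chi>_def by blast
  define v where "v = line_word T ln @ map Some z"
  have "M < M'"
    using z \<open>0 < m N\<close> cspan_iff[of z s alph] admissible_interval_nonempty by fastforce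
  moreover have "v \<in> vspan s alph {M..<M'}"
    unfolding v_def using vspan_append_cspan[OF line_word_in_vspan[OF \<open>i \<le> M\<close> m ln] z] .
  moreover have "P @ substc v a \<notin> E" if P: "P \<in> Pre" and a: "a \<in> Al (k + i)" for P a
  proof
    assume "P @ substc v a \<in> E"
    then have "P @ substc (line_word T ln) a' @ z \<in> E" if "a' \<in> Al k" for a'
      using mono_line_prefix_colouring[OF mono[unfolded \<chi>_def] P a] Al_mono[of k "k + i"] that
      unfolding v_def by auto
    then show False
      using avoid[OF P ln] by blast
  qed
  ultimately show ?thesis
    unfolding good_block_def by blast
qed

lemma stage_step:
  assumes st: "stage i M T Pre"
  shows "\<exists>v M' T'. good_block i M Pre v M' \<and> stage (Suc i) M' T' (extend_prefixes Pre v i)"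
proof -
  have iM: "i \<le> M" and T: "T \<in> varseqs Al" "extracted Al (k + M) T (\<lambda>n. s (M + n))"
    and "finite Pre" and Pre: "Pre \<subseteq> insert [] (cspan s alph {0..<M})"
    using st unfolding stage_def by auto
  obtain N where HJ: "\<And>\<chi>::'a list \<Rightarrow> 'a list set. \<chi> ` cube (Al (k + i)) N \<subseteq> Pow Pre \<Longrightarrow>
      \<exists>ln\<in>lines (Al (k + i)) N. mono_line \<chi> (Al (k + i)) ln"
    using hales_jewett_colours[OF hales_jewett_theorem[OF finite_Al[of "k + i"] Al_nonempty], of "Pow Pre"]
      \<open>finite Pre\<close> by auto
  have "(\<lambda>_. {}) ` cube (Al (k + i)) N \<subseteq> Pow Pre"
    by auto
  from HJ[of "\<lambda>_. {}", OF this] obtain ln0 where "ln0 \<in> lines (Al (k + i)) N"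
    by blast
  then have "0 < N"
    by (rule lines_length_pos)
  obtain m where m: "blocks Al (k + M) T N (\<lambda>n. s (M + n)) m"
    and tail: "extracted Al (k + M + m N) (\<lambda>n. T (N + n)) (\<lambda>n. s (M + (m N + n)))"
    using extracted_tail[OF T(2)] by blast
  define M' where "M' = M + m N"
  have "N \<le> m N"
    using increasing_prefix_ge_index[of N m N] m unfolding blocks_def by auto
  then have "0 < m N"
    using \<open>0 < N\<close> by simp
  have tail': "extracted Al (k + M') (\<lambda>n. T (N + n)) (\<lambda>n. s (M' + n))"
    using tail unfolding M'_def by (simp add: add.assoc)
  have T': "(\<lambda>n. T (N + n)) \<in> varseqs Al"
    using T(1) unfolding varseqs_def by blast
  define W where "W = (\<lambda>(P, ln). map Some P @ line_word T ln) ` (Pre \<times> lines (Al (k + i)) N)"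
  have fin_W: "finite W"
    unfolding W_def using \<open>finite Pre\<close> finite_lines[OF finite_Al] by simp
  have W: "W \<subseteq> vspan s alph {0..<M'}"
    unfolding W_def M'_def by (rule prefixed_line_words_in_vspan[OF iM m Pre])
  have "1 \<le> M'"
    using \<open>0 < m N\<close> unfolding M'_def by simp
  from avoiding_word[OF fin_W W this T' tail'] obtain R z where R: "R \<in> varseqs Al"
    "extracted Al (k + M') R (\<lambda>n. T (N + n))" and "z \<in> cspan R alph UNIV"
    and avoid: "\<And>w. w \<in> W \<Longrightarrow> \<exists>a\<in>Al k. substc w a @ z \<notin> E"
    by blast
  obtain M'' T'' where "z \<in> cspan s alph {M'..<M''}" and T'': "T'' \<in> varseqs Al"
    "extracted Al (k + M'') T'' (\<lambda>n. s (M'' + n))"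
    using cspan_prefix_split[OF R(1) extracted_trans[OF mono_Al R(2) tail'] \<open>z \<in> cspan R alph UNIV\<close>] .
  moreover have "\<exists>a\<in>Al k. P @ substc (line_word T ln) a @ z \<notin> E"
    if "P \<in> Pre" "ln \<in> lines (Al (k + i)) N" for P ln
  proof -
    have "map Some P @ line_word T ln \<in> W"
      unfolding W_def using that by (auto intro: rev_image_eqI[of "(P, ln)"])
    from avoid[OF this] show ?thesis
      by simp
  qed
  ultimately obtain v where "good_block i M Pre v M''"
    using good_block_from_line[OF iM m HJ \<open>0 < m N\<close>] unfolding M'_def by blast
  then show ?thesis
    using stage_extend[OF st _ T''] by blast
qed

lemma block_sequence:
  obtains Ms Ps vs where "Ms 0 = 0" and "\<And>i. [] \<in> Ps i"
    and "\<And>i. good_block i (Ms i) (Ps i) (vs i) (Ms (Suc i))"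
    and "\<And>i. Ps (Suc i) = extend_prefixes (Ps i) (vs i) i"
proof -
  define P where "P i x \<longleftrightarrow> stage i (fst x) (fst (snd x)) (snd (snd x)) \<and> (i = 0 \<longrightarrow> fst x = 0)"
    for i x
  define Q :: "nat \<Rightarrow> nat \<times> (nat \<Rightarrow> 'a option list) \<times> 'a list set \<Rightarrow>
      nat \<times> (nat \<Rightarrow> 'a option list) \<times> 'a list set \<Rightarrow> bool"
    where "Q i x y \<longleftrightarrow> (\<exists>v. good_block i (fst x) (snd (snd x)) v (fst y) \<and>
    snd (snd y) = extend_prefixes (snd (snd x)) v i)" for i x y
  have "stage 0 0 s {[]}"
    unfolding stage_def using s_varseq extracted_refl[of Al k s] by simp
  then have "\<exists>x. P 0 x"
    unfolding P_def by auto
  moreover have "\<exists>y. P (Suc i) y \<and> Q i x y" if "P i x" for i x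
    using that stage_step unfolding P_def Q_def by fastforce
  ultimately obtain f where f: "\<And>i. P i (f i) \<and> Q i (f i) (f (Suc i))"
    using dependent_nat_choice[of P Q] by blast
  define Ms where "Ms i = fst (f i)" for i
  define Ps where "Ps i = snd (snd (f i))" for i
  have "\<forall>i. \<exists>v. good_block i (Ms i) (Ps i) v (Ms (Suc i)) \<and> Ps (Suc i) = extend_prefixes (Ps i) v i"
    using f unfolding Q_def Ms_def Ps_def by blast
  then obtain vs where "\<forall>i. good_block i (Ms i) (Ps i) (vs i) (Ms (Suc i)) \<and>
      Ps (Suc i) = extend_prefixes (Ps i) (vs i) i"
    by (rule choice[THEN exE])
  moreover have "Ms 0 = 0" and "[] \<in> Ps i" for i
    using f unfolding P_def Ms_def Ps_def stage_def by auto
  ultimately show ?thesis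
    using that by blast
qed

lemma span_words_in_prefixes:
  assumes empty: "\<And>i. [] \<in> Ps i" and Ps: "\<And>i. Ps (Suc i) = extend_prefixes (Ps i) (vs i) i"
    and "sorted_wrt (\<lambda>p q. fst p < fst q) ps" and "\<forall>(l, a)\<in>set ps. a \<in> alph l \<and> l < n"
  shows "concat (map (\<lambda>(l, a). substc (vs l) a) ps) \<in> Ps n"
  using assms(3,4)
proof (induction ps arbitrary: n rule: rev_induct)
  case Nil
  then show ?case
    using empty by simp
next
  case (snoc x xs)
  obtain l a where x: "x = (l, a)"
    by (cases x)
  have "sorted_wrt (\<lambda>p q. fst p < fst q) xs" and "\<forall>(l', a')\<in>set xs. a' \<in> alph l' \<and> l' < l"
    using snoc.prems unfolding x by (auto simp: sorted_wrt_append)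
  then have "concat (map (\<lambda>(l, a). substc (vs l) a) xs) \<in> Ps l"
    using snoc.IH by blast
  moreover have "a \<in> alph l" and "l < n"
    using snoc.prems(2) unfolding x by auto
  ultimately have "concat (map (\<lambda>(l, a). substc (vs l) a) (xs @ [x])) \<in> Ps (Suc l)"
    unfolding Ps extend_prefixes_def x by auto
  moreover have "Ps j \<subseteq> Ps (Suc j)" for j
    using Ps unfolding extend_prefixes_def by auto
  then have "Ps (Suc l) \<subseteq> Ps n"
    using lift_Suc_mono_le[of Ps "Suc l" n] \<open>l < n\<close> by simp
  ultimately show ?case
    by blast
qed

theorem contradiction: False
proof -
  obtain Ms Ps vs where M0: "Ms 0 = 0" and empty: "\<And>i. [] \<in> Ps i"
    and good: "\<And>i. good_block i (Ms i) (Ps i) (vs i) (Ms (Suc i))"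
    and Ps: "\<And>i. Ps (Suc i) = extend_prefixes (Ps i) (vs i) i"
    using block_sequence by blast
  have vs: "vs i \<in> vspan s alph {Ms i..<Ms (Suc i)}" and "Ms i < Ms (Suc i)" for i
    using good unfolding good_block_def by auto
  then have "extracted Al k vs s"
    unfolding extracted_iff_blocks blocks_def using M0 by blast
  moreover have "vs \<in> varseqs Al"
    unfolding varseqs_def using vspan_in_varwords[OF s_varseq vs] by (auto simp: Alph_def)
  ultimately obtain z where "z \<in> E" and "z \<in> cspan vs alph UNIV"
    using large_E unfolding large_def by blast
  then obtain ps where z: "z = concat (map (\<lambda>(l, a). substc (vs l) a) ps)" and "ps \<noteq> []"
    and sorted: "sorted_wrt (\<lambda>p q. fst p < fst q) ps" and letters: "\<forall>(l, a) \<in> set ps. a \<in> alph l"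
    unfolding cspan_def by blast
  then obtain xs p where "ps = xs @ [p]"
    using rev_exhaust by blast
  moreover obtain l a where "p = (l, a)"
    by (cases p)
  ultimately have ps: "ps = xs @ [(l, a)]"
    by simp
  have "sorted_wrt (\<lambda>p q. fst p < fst q) xs" and "\<forall>(l', a')\<in>set xs. a' \<in> alph l' \<and> l' < l"
    using sorted letters unfolding ps by (auto simp: sorted_wrt_append)
  then have "concat (map (\<lambda>(l, a). substc (vs l) a) xs) \<in> Ps l"
    using span_words_in_prefixes[OF empty Ps] by blast
  moreover have "a \<in> alph l"
    using letters unfolding ps by auto
  ultimately show False
    using good[of l] \<open>z \<in> E\<close> unfolding good_block_def z ps by auto
qed

end

theorem lemma3p8:
  fixes Al :: "nat \<Rightarrow> 'a set" and k :: nat and E :: "'a list set"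
    and s :: "nat \<Rightarrow> 'a option list"
  assumes "\<And>n. finite (Al n)" and "\<And>n. Al n \<noteq> {}" and "\<And>n. Al n \<subseteq> Al (Suc n)"
    and "E \<subseteq> words Al" and "s \<in> varseqs Al"
    and "large Al k E s"
  shows "\<exists>m \<ge> 1. \<exists>w \<in> vspan s (\<lambda>n. Al (k + n)) {0..<m}. \<exists>t \<in> varseqs Al.
           extracted Al (k + m) t (\<lambda>n. s (m + n)) \<and>
           large Al (k + m) (E \<inter> shiftset Al E {substc w a | a. a \<in> Al k}) t"
proof (rule ccontr)
  assume "\<not> ?thesis"
  moreover have "mono Al"
    using assms(3) by (simp add: mono_iff_le_Suc)
  ultimately interpret lemma3p8_counterexample Al k E s
    using assms by unfold_locales auto
  show False
    by (rule contradiction)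
qed

end
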